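(* Fix a function $\alpha\in\mathcal A$ such that $\alpha(\lambda)=1$ for all sufficiently large $\lambda$ and $\alpha(\lambda)=0$ for all sufficiently negative $\lambda$. For $A_n,A\in\mathcal S$ the following are equivalent: (i) $\rho(A_n,A)\to 0$; (ii) $\|f(A_n)-f(A)\|\to 0$ for every $f\in\mathcal A$; (iii) $\gamma(A_n,A)\to 0$ and $\|\alpha(A_n)-\alpha(A)\|\to 0$.
   Context: Let $H$ be a separable real Hilbert space; operators are extended complex-linearly to the complexification of $H$ whenever complex numbers appear. $\mathcal S$ denotes the set of densely defined selfadjoint operators on $H$. The Riesz map is $\Psi(A)=A(1+A^2)^{-1/2}$; the Riesz metric is $\rho(A_0,A_1)=\|\Psi(A_0)-\Psi(A_1)\|$; the gap metric is $\gamma(A_0,A_1)=\|(\mathbf i+A_0)^{-1}-(\mathbf i+A_1)^{-1}\|+\|(\mathbf i-A_0)^{-1}-(\mathbf i-A_1)^{-1}\|$. $\mathcal A$ is the $C^*$-algebra of continuous functions $f:\mathbb R\to\mathbb C$ for which both limits $\lim_{\lambda\to\pm\infty}f(\lambda)$ exist. For $A\in\mathcal S$ and $f\in\mathcal A$, $f(A)$ is defined by the functional calculus. *)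

theory Defs
  imports "HOL-Analysis.Analysis" "HOL-Computational_Algebra.Polynomial"
begin

text \<open>A (possibly unbounded) operator on a real Hilbert space 'a is a pair (domain, map).\<close>
type_synonym 'a op = "'a set \<times> ('a \<Rightarrow> 'a)"

definition dsa :: "('a::{real_inner,complete_space}) op \<Rightarrow> bool" where
  "dsa A \<longleftrightarrow> (let D = fst A; T = snd A in
     subspace D \<and> closure D = UNIV \<and>
     (\<forall>x\<in>D. \<forall>y\<in>D. T (x + y) = T x + T y) \<and>
     (\<forall>c. \<forall>x\<in>D. T (c *\<^sub>R x) = c *\<^sub>R T x) \<and>
     (\<forall>x\<in>D. \<forall>y\<in>D. inner (T x) y = inner x (T y)) \<and>
     (\<forall>y z. (\<forall>x\<in>D. inner (T x) y = inner x z) \<longrightarrow> y \<in> D))"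

text \<open>Complexification: H_C = H \<times> H, (u,v) = u + i v; norm of the product type is the Hilbert norm.\<close>
definition cmul :: "complex \<Rightarrow> 'a::real_vector \<times> 'a \<Rightarrow> 'a \<times> 'a" where
  "cmul c w = (Re c *\<^sub>R fst w - Im c *\<^sub>R snd w, Re c *\<^sub>R snd w + Im c *\<^sub>R fst w)"

definition cext :: "('a \<Rightarrow> 'a) \<Rightarrow> 'a \<times> 'a \<Rightarrow> 'a \<times> 'a" where
  "cext T w = (T (fst w), T (snd w))"

text \<open>(c + s A)^{-1} on the complexification, s = 1 or s = -1.\<close>
definition shifted_inv :: "('a::{real_inner,complete_space}) op \<Rightarrow> complex \<Rightarrow> real \<Rightarrow> 'a \<times> 'a \<Rightarrow> 'a \<times> 'a" where
  "shifted_inv A c s w = (THE x. x \<in> fst A \<times> fst A \<and> cmul c x + s *\<^sub>R cext (snd A) x = w)"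

definition gap_metric :: "('a::{real_inner,complete_space}) op \<Rightarrow> 'a op \<Rightarrow> real" where
  "gap_metric A0 A1 =
     onorm (\<lambda>w. shifted_inv A0 \<i> 1 w - shifted_inv A1 \<i> 1 w) +
     onorm (\<lambda>w. shifted_inv A0 \<i> (-1) w - shifted_inv A1 \<i> (-1) w)"

definition one_plus_sq_inv :: "('a::{real_inner,complete_space}) op \<Rightarrow> 'a \<Rightarrow> 'a" where
  "one_plus_sq_inv A w = (THE x. x \<in> fst A \<and> snd A x \<in> fst A \<and> x + snd A (snd A x) = w)"

definition inv_sqrt_one_plus_sq :: "('a::{real_inner,complete_space}) op \<Rightarrow> 'a \<Rightarrow> 'a" where
  "inv_sqrt_one_plus_sq A = (THE S. bounded_linear S \<and> (\<forall>x y. inner (S x) y = inner x (S y)) \<and>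
       (\<forall>x. 0 \<le> inner (S x) x) \<and> S \<circ> S = one_plus_sq_inv A)"

definition riesz :: "('a::{real_inner,complete_space}) op \<Rightarrow> 'a \<Rightarrow> 'a" where
  "riesz A x = snd A (inv_sqrt_one_plus_sq A x)"

definition riesz_metric :: "('a::{real_inner,complete_space}) op \<Rightarrow> 'a op \<Rightarrow> real" where
  "riesz_metric A0 A1 = onorm (\<lambda>x. riesz A0 x - riesz A1 x)"

definition algA :: "(real \<Rightarrow> complex) set" where
  "algA = {f. continuous_on UNIV f \<and> (\<exists>l. (f \<longlongrightarrow> l) at_top) \<and> (\<exists>l. (f \<longlongrightarrow> l) at_bot)}"

definition psi :: "real \<Rightarrow> real" where
  "psi l = l / sqrt (1 + l\<^sup>2)"

definition poly_op :: "complex poly \<Rightarrow> ('b::real_vector \<times> 'b \<Rightarrow> 'b \<times> 'b) \<Rightarrow> 'b \<times> 'b \<Rightarrow> 'b \<times> 'b" where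
  "poly_op p B x = (\<Sum>k\<le>degree p. cmul (coeff p k) ((B ^^ k) x))"

text \<open>Functional calculus: f(A) = g(\<Psi>(A)) with g = f \<circ> \<psi>^{-1} (continuously extended to [-1,1]),
  realised as the norm limit of p_k(\<Psi>(A)) for polynomials p_k with p_k \<circ> \<psi> \<rightarrow> f uniformly on \<real>.\<close>
definition fcalc :: "(real \<Rightarrow> complex) \<Rightarrow> ('a::{real_inner,complete_space}) op \<Rightarrow> 'a \<times> 'a \<Rightarrow> 'a \<times> 'a" where
  "fcalc f A = (THE B. bounded_linear B \<and>
     (\<forall>p :: nat \<Rightarrow> complex poly.
        (\<forall>e>0. \<forall>\<^sub>F k in sequentially. \<forall>l. cmod (poly (p k) (complex_of_real (psi l)) - f l) < e)
        \<longrightarrow> (\<lambda>k. onorm (\<lambda>x. poly_op (p k) (cext (riesz A)) x - B x)) \<longlonglongrightarrow> 0))"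

end

theory Submission
  imports Defs "HOL-Computational_Algebra.Fundamental_Theorem_Algebra" "HOL-Real_Asymp.Real_Asymp"
begin

text \<open>The Riesz transform \<open>\<Psi>(A) = A (1 + A\<^sup>2)\<^sup>-\<^sup>1\<^sup>/\<^sup>2\<close> of a selfadjoint \<open>A\<close> is a selfadjoint contraction,
  and \<open>f(A) = g(\<Psi>(A))\<close> where \<open>g\<close> is \<open>f \<circ> \<psi>\<^sup>-\<^sup>1\<close> extended continuously to [-1, 1]. Everything thus
  reduces to the continuous functional calculus of selfadjoint contractions, built here from
  polynomials: if \<open>p \<ge> 0\<close> on [-1, 1] then \<open>p\<close> is a sum of squares weighted by \<open>1\<close>, \<open>1 + t\<close>, \<open>1 - t\<close>
  and \<open>1 - t\<^sup>2\<close>, so \<open>p(B)\<close> is positive, which bounds \<open>\<parallel>p(B)\<parallel>\<close> by the supremum of \<open>|p|\<close> on [-1, 1].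

  For selfadjoint contractions \<open>B\<^sub>n\<close> and \<open>B\<close>, the continuous \<open>u\<close> with \<open>\<parallel>u(B\<^sub>n) - u(B)\<parallel> \<rightarrow> 0\<close> form a
  uniformly closed subalgebra of \<open>C[-1, 1]\<close>, which by Stone-Weierstrass is all of it as soon as it
  separates points. Convergence in the Riesz metric says that it contains \<open>t\<close>. Convergence in the
  gap metric says that it contains the real and imaginary parts of \<open>(\<i> + \<psi>\<^sup>-\<^sup>1 t)\<^sup>-\<^sup>1\<close>, which separate
  all points but \<open>\<plusminus>1\<close>, and these two are separated by \<open>\<alpha>\<close>.\<close>

section \<open>Hilbert spaces\<close>

lemma parallelogram_law:
  fixes a b :: "'a::real_inner"
  shows "norm (a - b)^2 + norm (a + b)^2 = 2 * norm a^2 + 2 * norm b^2"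
  by (simp add: power2_norm_eq_inner inner_add inner_diff inner_commute algebra_simps)

lemma inverse_Suc_tendsto_0: "(\<lambda>k::nat. 1 / (real k + 1)) \<longlonglongrightarrow> 0"
  using LIMSEQ_inverse_real_of_nat by (simp add: inverse_eq_divide add.commute)

lemma exists_minimizing_sequence:
  assumes "M \<noteq> {}"
  obtains y where "\<And>n. y n \<in> M" "\<And>n. norm (x - y n)^2 \<le> infdist x M ^ 2 + 1 / (real n + 1)"
proof -
  have "\<exists>y\<in>M. norm (x - y)^2 \<le> infdist x M ^ 2 + 1 / (real n + 1)" for n
  proof -
    define d where "d = infdist x M"
    have "infdist x M < sqrt (d^2 + 1 / (real n + 1))"
      using real_sqrt_less_mono[of "d^2" "d^2 + 1 / (real n + 1)"] infdist_nonneg[of x M] by (simp add: d_def)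
    then obtain y where "y \<in> M" "dist x y < sqrt (d^2 + 1 / (real n + 1))"
      using assms by (auto simp: infdist_notempty cINF_less_iff)
    moreover from this(2) have "norm (x - y)^2 < (sqrt (d^2 + 1 / (real n + 1)))^2"
      by (intro power_strict_mono) (auto simp: dist_norm)
    ultimately show ?thesis by (auto simp: d_def intro: add_nonneg_nonneg less_imp_le)
  qed
  then show ?thesis using that by metis
qed

\<comment> \<open>The parallelogram law at the midpoint of \<open>y\<close> and \<open>z\<close>, which lies in \<open>M\<close>.\<close>
lemma almost_nearest_points_convex_close:
  fixes M :: "'a::real_inner set"
  assumes M: "convex M" "y \<in> M" "z \<in> M"
    and near: "norm (x - y)^2 \<le> infdist x M ^ 2 + e" "norm (x - z)^2 \<le> infdist x M ^ 2 + e'"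
  shows "norm (y - z)^2 \<le> 2 * e + 2 * e'"
proof -
  have "(1/2) *\<^sub>R (y + z) \<in> M"
    using convexD[OF M, of "1/2" "1/2"] by (simp add: scaleR_add_right)
  moreover have "(x - y) + (x - z) = 2 *\<^sub>R (x - (1/2) *\<^sub>R (y + z))"
    by (simp add: scaleR_2 algebra_simps)
  ultimately have "2 * infdist x M \<le> norm ((x - y) + (x - z))"
    using infdist_le[of "(1/2) *\<^sub>R (y + z)" M x] by (simp add: dist_norm)
  then have "(2 * infdist x M)^2 \<le> norm ((x - y) + (x - z))^2"
    by (rule power_mono) (simp add: infdist_nonneg)
  moreover have "norm (y - z)^2 + norm ((x - y) + (x - z))^2 = 2 * norm (x - y)^2 + 2 * norm (x - z)^2"
    using parallelogram_law[of "x - z" "x - y"] by (simp add: add.commute)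
  ultimately show ?thesis using near by (simp add: power_mult_distrib)
qed

lemma exists_nearest_point_convex:
  fixes M :: "'a::{real_inner,complete_space} set"
  assumes M: "convex M" "closed M" "M \<noteq> {}"
  obtains m where "m \<in> M" "\<And>y. y \<in> M \<Longrightarrow> norm (x - m) \<le> norm (x - y)"
proof -
  define \<epsilon> where "\<epsilon> = (\<lambda>n::nat. 1 / (real n + 1))"
  obtain y where yM: "\<And>n. y n \<in> M" and yd: "\<And>n. norm (x - y n)^2 \<le> infdist x M ^ 2 + \<epsilon> n"
    using exists_minimizing_sequence[OF M(3)] unfolding \<epsilon>_def by blast
  have "Cauchy y"
  proof (rule metric_CauchyI)
    fix e :: real assume e: "e > 0"
    obtain N where "\<forall>n\<ge>N. norm (\<epsilon> n - 0) < e^2 / 4"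
      using LIMSEQ_D[OF inverse_Suc_tendsto_0, of "e^2 / 4"] e by (auto simp: \<epsilon>_def)
    then have N: "\<And>n. n \<ge> N \<Longrightarrow> \<epsilon> n < e^2 / 4" by auto
    have "dist (y m) (y n)^2 < e^2" if "m \<ge> N" "n \<ge> N" for m n
      using almost_nearest_points_convex_close[OF M(1) yM yM yd yd, of m n] N[OF that(1)] N[OF that(2)]
      by (simp add: dist_norm)
    then show "\<exists>N. \<forall>m\<ge>N. \<forall>n\<ge>N. dist (y m) (y n) < e"
      using e by (metis power_less_imp_less_base less_imp_le)
  qed
  then obtain m where lim: "y \<longlonglongrightarrow> m"
    using complete_UNIV convergent_eq_Cauchy by blast
  have "m \<in> M" using M(2) yM lim closed_sequentially by blast
  moreover have "norm (x - m)^2 \<le> infdist x M ^ 2"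
  proof (rule LIMSEQ_le[of "\<lambda>n. norm (x - y n)^2" _ "\<lambda>n. infdist x M ^ 2 + \<epsilon> n"])
    show "(\<lambda>n. norm (x - y n)^2) \<longlonglongrightarrow> norm (x - m)^2" by (intro tendsto_intros lim)
    show "(\<lambda>n. infdist x M ^ 2 + \<epsilon> n) \<longlonglongrightarrow> infdist x M ^ 2"
      using tendsto_add[OF tendsto_const inverse_Suc_tendsto_0] by (simp add: \<epsilon>_def)
  qed (use yd in blast)
  then have "norm (x - m) \<le> norm (x - y)" if "y \<in> M" for y
    using infdist_le[OF that, of x] infdist_nonneg[of x M]
    by (simp add: power2_le_iff_abs_le dist_norm)
  ultimately show ?thesis using that by blast
qed

lemma nearest_point_subspace_orthogonal:
  fixes M :: "'a::real_inner set"
  assumes M: "subspace M" and m: "m \<in> M" "\<And>y. y \<in> M \<Longrightarrow> norm (x - m) \<le> norm (x - y)"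
    and z: "z \<in> M"
  shows "inner (x - m) z = 0"
proof (rule ccontr)
  assume c: "inner (x - m) z \<noteq> 0"
  then have zz: "inner z z > 0" by auto
  define t where "t = inner (x - m) z / inner z z"
  have "m + t *\<^sub>R z \<in> M" using M m z by (simp add: subspace_add subspace_scale)
  then have "norm (x - m)^2 \<le> norm ((x - m) - t *\<^sub>R z)^2"
    using m(2) by (simp add: power_mono diff_diff_eq)
  also have "\<dots> = norm (x - m)^2 - 2 * t * inner (x - m) z + t^2 * inner z z"
    unfolding power2_norm_eq_inner
    by (simp add: inner_diff inner_commute algebra_simps power2_eq_square)
  also have "\<dots> = norm (x - m)^2 - (inner (x - m) z)^2 / inner z z"
    using zz by (simp add: t_def power2_eq_square field_simps)
  finally have "(inner (x - m) z)^2 / inner z z \<le> 0" by simp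
  moreover have "(inner (x - m) z)^2 / inner z z > 0" using c zz by simp
  ultimately show False by simp
qed

lemma exists_orthogonal_projection:
  fixes M :: "'a::{real_inner,complete_space} set"
  assumes "subspace M" "closed M"
  obtains m where "m \<in> M" "\<And>y. y \<in> M \<Longrightarrow> inner (x - m) y = 0"
proof -
  have "M \<noteq> {}" using assms(1) subspace_0 by blast
  then obtain m where "m \<in> M" "\<And>y. y \<in> M \<Longrightarrow> norm (x - m) \<le> norm (x - y)"
    using exists_nearest_point_convex[OF subspace_imp_convex[OF assms(1)] assms(2)] by blast
  then show ?thesis using that nearest_point_subspace_orthogonal[OF assms(1)] by blast
qed

lemma subspace_closure:
  fixes V :: "'a::real_normed_vector set"
  assumes "subspace V"
  shows "subspace (closure V)"
  unfolding subspace_def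
proof (intro conjI ballI allI)
  show "0 \<in> closure V" using assms subspace_0 closure_subset by blast
next
  fix x y assume "x \<in> closure V" "y \<in> closure V"
  then obtain a b where ab: "\<And>n. a n \<in> V" "a \<longlonglongrightarrow> x" "\<And>n. b n \<in> V" "b \<longlonglongrightarrow> y"
    unfolding closure_sequential by metis
  then have "(\<lambda>n. a n + b n) \<longlonglongrightarrow> x + y" "\<And>n. a n + b n \<in> V"
    using assms by (auto intro: tendsto_add subspace_add)
  then show "x + y \<in> closure V"
    unfolding closure_sequential by (auto intro!: exI[where x="\<lambda>n. a n + b n"])
next
  fix c :: real and x assume "x \<in> closure V"
  then obtain a where "\<And>n. a n \<in> V" "a \<longlonglongrightarrow> x" unfolding closure_sequential by metis
  then have "(\<lambda>n. c *\<^sub>R a n) \<longlonglongrightarrow> c *\<^sub>R x" "\<And>n. c *\<^sub>R a n \<in> V"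
    using assms by (auto intro: tendsto_scaleR subspace_scale)
  then show "c *\<^sub>R x \<in> closure V"
    unfolding closure_sequential by (auto intro!: exI[where x="\<lambda>n. c *\<^sub>R a n"])
qed

lemma dense_if_orthogonal_complement_trivial:
  fixes V :: "'a::{real_inner,complete_space} set"
  assumes V: "subspace V" and orth: "\<And>z. (\<forall>y\<in>V. inner z y = 0) \<Longrightarrow> z = 0"
  shows "closure V = UNIV"
proof -
  have "x \<in> closure V" for x
  proof -
    obtain m where m: "m \<in> closure V" "\<And>y. y \<in> closure V \<Longrightarrow> inner (x - m) y = 0"
      using exists_orthogonal_projection[OF subspace_closure[OF V] closed_closure] by blast
    then have "x - m = 0" using orth closure_subset by blast
    then show ?thesis using m(1) by simp
  qed
  then show ?thesis by blast
qed

lemma orthogonal_dense_eq_0: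
  fixes u :: "'a::real_inner"
  assumes "closure D = UNIV" "\<And>y. y \<in> D \<Longrightarrow> inner y u = 0"
  shows "u = 0"
proof -
  have "inner u u = 0"
    using continuous_constant_on_closure[of D "\<lambda>y. inner y u" 0 u] assms
    by (simp add: continuous_on_inner continuous_on_id)
  then show ?thesis by simp
qed

definition bounded_selfadjoint :: "('a::real_inner \<Rightarrow> 'a) \<Rightarrow> bool" where
  "bounded_selfadjoint X \<longleftrightarrow> bounded_linear X \<and> (\<forall>x y. inner (X x) y = inner x (X y))"

definition positive_op :: "('a::real_inner \<Rightarrow> 'a) \<Rightarrow> bool" where
  "positive_op X \<longleftrightarrow> bounded_selfadjoint X \<and> (\<forall>x. 0 \<le> inner (X x) x)"

lemma quadratic_nonneg_discriminant:
  fixes a b c :: real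
  assumes "\<And>t. 0 \<le> a + 2 * t * b + t^2 * c" "0 \<le> c"
  shows "b^2 \<le> a * c"
proof (cases "c = 0")
  case True
  show ?thesis
  proof (cases "b = 0")
    case False
    have "0 \<le> a + 2 * (-(a+1)/(2*b)) * b" using assms(1)[of "-(a+1)/(2*b)"] True by simp
    then show ?thesis using False by (simp add: field_simps)
  qed (use True assms(1)[of 0] in simp)
next
  case False
  then have c: "c > 0" using assms(2) by simp
  have "0 \<le> a + 2 * (-b/c) * b + (-b/c)^2 * c" by (rule assms(1))
  then show ?thesis using c by (simp add: power2_eq_square field_simps)
qed

lemma positive_op_Cauchy_Schwarz:
  assumes "positive_op X"
  shows "(inner (X x) y)^2 \<le> inner (X x) x * inner (X y) y"
proof -
  have bl: "bounded_linear X" and sy: "\<And>x y. inner (X x) y = inner x (X y)"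
    and ps: "\<And>x. 0 \<le> inner (X x) x"
    using assms unfolding positive_op_def bounded_selfadjoint_def by auto
  interpret bounded_linear X by fact
  have "0 \<le> inner (X x) x + 2 * t * inner (X x) y + t^2 * inner (X y) y" for t
  proof -
    have "0 \<le> inner (X (x + t *\<^sub>R y)) (x + t *\<^sub>R y)" by (rule ps)
    also have "\<dots> = inner (X x) x + t * inner (X x) y + t * inner (X y) x + t^2 * inner (X y) y"
      by (simp add: add scale inner_add inner_commute power2_eq_square algebra_simps)
    finally show ?thesis using sy[of y x] by (simp add: inner_commute)
  qed
  then show ?thesis by (rule quadratic_nonneg_discriminant) (rule ps)
qed

lemma positive_op_form_eq_0:
  assumes "positive_op X" "inner (X x) x = 0"
  shows "X x = 0"
  using positive_op_Cauchy_Schwarz[OF assms(1), of x "X x"] assms(2) by simp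

section \<open>Real polynomials of an operator\<close>

definition real_poly_op :: "real poly \<Rightarrow> ('a::real_vector \<Rightarrow> 'a) \<Rightarrow> 'a \<Rightarrow> 'a" where
  "real_poly_op p B x = (\<Sum>k\<le>degree p. coeff p k *\<^sub>R (B ^^ k) x)"

lemma real_poly_op_eq_sum:
  assumes "degree p \<le> n"
  shows "real_poly_op p B x = (\<Sum>k\<le>n. coeff p k *\<^sub>R (B ^^ k) x)"
  unfolding real_poly_op_def
  by (rule sum.mono_neutral_left) (use assms in \<open>auto simp: coeff_eq_0\<close>)

lemma real_poly_op_add: "real_poly_op (p + q) B x = real_poly_op p B x + real_poly_op q B x"
proof -
  define n where "n = max (degree p) (degree q)"
  have "degree (p + q) \<le> n" "degree p \<le> n" "degree q \<le> n"
    by (auto simp: n_def degree_add_le)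
  then show ?thesis by (simp add: real_poly_op_eq_sum[of _ n] scaleR_add_left sum.distrib)
qed

lemma real_poly_op_smult: "real_poly_op (smult c p) B x = c *\<^sub>R real_poly_op p B x"
  using degree_smult_le[of c p]
  by (simp add: real_poly_op_eq_sum[of _ "degree p"] scaleR_sum_right real_poly_op_def)

lemma real_poly_op_diff: "real_poly_op (p - q) B x = real_poly_op p B x - real_poly_op q B x"
  using real_poly_op_add[of p "-q" B x] real_poly_op_smult[of "-1" q B x] by simp

lemma real_poly_op_0 [simp]: "real_poly_op 0 B x = 0"
  by (simp add: real_poly_op_def)

lemma real_poly_op_const [simp]: "real_poly_op [:c:] B x = c *\<^sub>R x"
  by (simp add: real_poly_op_def)

lemma real_poly_op_1 [simp]: "real_poly_op 1 B x = x"
  using real_poly_op_const[of 1 B x] by (simp add: one_pCons)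

lemma real_poly_op_pCons:
  assumes "linear B"
  shows "real_poly_op (pCons a p) B x = a *\<^sub>R x + B (real_poly_op p B x)"
proof -
  have "real_poly_op (pCons a p) B x = (\<Sum>k\<le>Suc (degree p). coeff (pCons a p) k *\<^sub>R (B ^^ k) x)"
    by (rule real_poly_op_eq_sum[OF degree_pCons_le])
  also have "\<dots> = a *\<^sub>R x + (\<Sum>k\<le>degree p. coeff p k *\<^sub>R (B ^^ Suc k) x)"
    by (subst sum.atMost_Suc_shift) simp
  also have "(\<Sum>k\<le>degree p. coeff p k *\<^sub>R (B ^^ Suc k) x) = B (real_poly_op p B x)"
    by (simp add: real_poly_op_def linear_sum[OF assms] linear_scale[OF assms])
  finally show ?thesis .
qed

lemma real_poly_op_mult:
  assumes "linear B"
  shows "real_poly_op (p * q) B x = real_poly_op p B (real_poly_op q B x)"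
proof (induct p arbitrary: x)
  case (pCons a p)
  have "real_poly_op (pCons a p * q) B x = real_poly_op (smult a q + pCons 0 (p * q)) B x" by simp
  also have "\<dots> = a *\<^sub>R real_poly_op q B x + B (real_poly_op (p * q) B x)"
    by (simp add: real_poly_op_add real_poly_op_smult real_poly_op_pCons[OF assms])
  finally show ?case using pCons by (simp add: real_poly_op_pCons[OF assms])
qed simp

lemma bounded_linear_funpow:
  fixes B :: "'a::real_normed_vector \<Rightarrow> 'a"
  assumes "bounded_linear B"
  shows "bounded_linear (B ^^ k)"
proof (induct k)
  case 0
  then show ?case by (simp add: id_def bounded_linear_ident)
next
  case (Suc k)
  then show ?case using bounded_linear_compose[OF assms Suc] by (simp add: comp_def)
qed

lemma bounded_linear_real_poly_op:
  assumes "bounded_linear B"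
  shows "bounded_linear (real_poly_op p B)"
  unfolding real_poly_op_def
  by (intro bounded_linear_sum bounded_linear_compose[OF bounded_linear_scaleR_right]
      bounded_linear_funpow assms)

lemma inner_funpow_symmetric:
  fixes B :: "'a::real_inner \<Rightarrow> 'a"
  assumes "\<And>x y. inner (B x) y = inner x (B y)"
  shows "inner ((B ^^ k) x) y = inner x ((B ^^ k) y)"
proof (induct k arbitrary: x y)
  case (Suc k)
  have "inner ((B ^^ Suc k) x) y = inner ((B ^^ k) x) (B y)" by (simp add: assms)
  also have "\<dots> = inner x ((B ^^ Suc k) y)" by (simp add: Suc funpow_Suc_right del: funpow.simps)
  finally show ?case .
qed simp

lemma bounded_selfadjoint_real_poly_op:
  assumes "bounded_selfadjoint B"
  shows "bounded_selfadjoint (real_poly_op p B)"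
  using assms bounded_linear_real_poly_op[of B p] inner_funpow_symmetric[of B]
  by (simp add: bounded_selfadjoint_def real_poly_op_def inner_sum_left inner_sum_right)

lemma real_poly_op_commute:
  assumes "linear C" "\<And>x. B (C x) = C (B x)"
  shows "real_poly_op p B (C x) = C (real_poly_op p B x)"
proof -
  have "(B ^^ k) (C x) = C ((B ^^ k) x)" for k x
    by (induct k) (auto simp: assms)
  then show ?thesis
    by (simp add: real_poly_op_def linear_sum[OF assms(1)] linear_scale[OF assms(1)])
qed


section \<open>Polynomials that are nonnegative on [-1, 1]\<close>

inductive weighted_sos :: "real poly \<Rightarrow> bool" where
  square: "weighted_sos (s * s)"
| square_1_plus: "weighted_sos (s * s * [:1, 1:])"
| square_1_minus: "weighted_sos (s * s * [:1, -1:])"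
| square_1_minus_sq: "weighted_sos (s * s * [:1, 0, -1:])"
| add: "weighted_sos p \<Longrightarrow> weighted_sos q \<Longrightarrow> weighted_sos (p + q)"

lemma weighted_sos_mult_square: "weighted_sos p \<Longrightarrow> weighted_sos (s * s * p)"
proof (induct p rule: weighted_sos.induct)
  case (square t) then show ?case using weighted_sos.square[of "s * t"] by (simp add: algebra_simps)
next
  case (square_1_plus t) then show ?case using weighted_sos.square_1_plus[of "s * t"] by (simp add: algebra_simps)
next
  case (square_1_minus t) then show ?case using weighted_sos.square_1_minus[of "s * t"] by (simp add: algebra_simps)
next
  case (square_1_minus_sq t) then show ?case using weighted_sos.square_1_minus_sq[of "s * t"] by (simp add: algebra_simps)
next
  case (add p q) then show ?case using weighted_sos.add by (simp add: distrib_left)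
qed

lemma weighted_sos_smult: "c \<ge> 0 \<Longrightarrow> weighted_sos p \<Longrightarrow> weighted_sos (smult c p)"
  using weighted_sos_mult_square[of p "[:sqrt c:]"] by (simp add: real_sqrt_mult[symmetric])

lemma weighted_sos_const: "c \<ge> 0 \<Longrightarrow> weighted_sos [:c:]"
  using weighted_sos.square[of "[:sqrt c:]"] by (simp add: real_sqrt_mult[symmetric])

lemma weighted_sos_mult_1_plus: "weighted_sos p \<Longrightarrow> weighted_sos ([:1, 1:] * p)"
proof (induct p rule: weighted_sos.induct)
  case (square t) then show ?case using weighted_sos.square_1_plus[of t] by (simp add: algebra_simps)
next
  case (square_1_plus t) then show ?case using weighted_sos.square[of "t * [:1, 1:]"] by (simp add: algebra_simps)
next
  case (square_1_minus t)
  have "[:1, 1:] * (t * t * [:1, -1:]) = t * t * ([:1, 1:] * [:1, -1:])" by (simp only: ac_simps)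
  also have "[:1, 1:] * [:1, -1:] = [:1, 0, -1::real:]" by simp
  finally show ?case by (simp only: weighted_sos.square_1_minus_sq)
next
  case (square_1_minus_sq t)
  have "[:1, 1:] * (t * t * [:1, 0, -1:]) = t * t * ([:1, 1:] * [:1, 0, -1:])" by (simp only: ac_simps)
  also have "[:1, 1:] * [:1, 0, -1:] = [:1, 1:] * [:1, 1:] * [:1, -1::real:]" by simp
  also have "t * t * ([:1, 1:] * [:1, 1:] * [:1, -1:]) = (t * [:1, 1:]) * (t * [:1, 1:]) * [:1, -1:]"
    by (simp only: ac_simps)
  finally show ?case by (simp only: weighted_sos.square_1_minus)
next
  case (add p q) then show ?case using weighted_sos.add by (simp add: distrib_left)
qed

lemma weighted_sos_mult_1_minus: "weighted_sos p \<Longrightarrow> weighted_sos ([:1, -1:] * p)"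
proof (induct p rule: weighted_sos.induct)
  case (square t) then show ?case using weighted_sos.square_1_minus[of t] by (simp add: algebra_simps)
next
  case (square_1_plus t)
  have "[:1, -1:] * (t * t * [:1, 1:]) = t * t * ([:1, 1:] * [:1, -1:])" by (simp only: ac_simps)
  also have "[:1, 1:] * [:1, -1:] = [:1, 0, -1::real:]" by simp
  finally show ?case by (simp only: weighted_sos.square_1_minus_sq)
next
  case (square_1_minus t) then show ?case using weighted_sos.square[of "t * [:1, -1:]"] by (simp add: algebra_simps)
next
  case (square_1_minus_sq t)
  have "[:1, -1:] * (t * t * [:1, 0, -1:]) = t * t * ([:1, -1:] * [:1, 0, -1:])" by (simp only: ac_simps)
  also have "[:1, -1:] * [:1, 0, -1:] = [:1, -1:] * [:1, -1:] * [:1, 1::real:]" by simp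
  also have "t * t * ([:1, -1:] * [:1, -1:] * [:1, 1:]) = (t * [:1, -1:]) * (t * [:1, -1:]) * [:1, 1:]"
    by (simp only: ac_simps)
  finally show ?case by (simp only: weighted_sos.square_1_plus)
next
  case (add p q) then show ?case using weighted_sos.add by (simp add: distrib_left)
qed

lemma weighted_sos_mult_root_below:
  assumes "weighted_sos p" "r \<le> -1"
  shows "weighted_sos ([:-r, 1:] * p)"
proof -
  have "[:-r, 1:] * p = [:1, 1:] * p + smult (-r - 1) p"
    by (rule poly_eq_poly_eq_iff[THEN iffD1]) (simp add: fun_eq_iff algebra_simps)
  also have "weighted_sos \<dots>"
    using assms by (intro weighted_sos.add weighted_sos_mult_1_plus weighted_sos_smult) auto
  finally show ?thesis .
qed

lemma weighted_sos_mult_root_above: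
  assumes "weighted_sos p" "1 \<le> r"
  shows "weighted_sos ([:r, -1:] * p)"
proof -
  have "[:r, -1:] * p = [:1, -1:] * p + smult (r - 1) p"
    by (rule poly_eq_poly_eq_iff[THEN iffD1]) (simp add: fun_eq_iff algebra_simps)
  also have "weighted_sos \<dots>"
    using assms by (intro weighted_sos.add weighted_sos_mult_1_minus weighted_sos_smult) auto
  finally show ?thesis .
qed

lemma nonneg_at_limit_point:
  fixes f :: "real \<Rightarrow> real"
  assumes "isCont f r" "r islimpt S" "\<And>t. t \<in> S \<Longrightarrow> t \<noteq> r \<Longrightarrow> 0 \<le> f t"
  shows "0 \<le> f r"
proof (rule tendsto_lowerbound)
  show "(f \<longlongrightarrow> f r) (at r within S)"
    using tendsto_within_subset[OF assms(1)[unfolded isCont_def] subset_UNIV] .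
  show "\<forall>\<^sub>F t in at r within S. 0 \<le> f t"
    using assms(3) by (auto simp: eventually_at_filter)
  show "at r within S \<noteq> bot" using assms(2) by (simp add: trivial_limit_within)
qed

lemma poly_interior_root_double:
  fixes q :: "real poly"
  assumes "\<And>t. t \<in> {-1..1} \<Longrightarrow> 0 \<le> (t - r) * poly q t" "-1 < r" "r < 1"
  shows "poly q r = 0"
proof -
  have "0 \<le> poly q r"
  proof (rule nonneg_at_limit_point[where r=r and S="{r..1}"])
    fix t assume "t \<in> {r..1}" "t \<noteq> r"
    then have "0 \<le> (t - r) * poly q t" "0 < t - r" using assms(1)[of t] assms(2) by auto
    then show "0 \<le> poly q t" by (simp add: zero_le_mult_iff)
  qed (use assms in auto)
  moreover have "0 \<le> - poly q r"
  proof (rule nonneg_at_limit_point[where f="\<lambda>t. - poly q t" and r=r and S="{-1..r}"])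
    fix t assume "t \<in> {-1..r}" "t \<noteq> r"
    then have "0 \<le> (t - r) * poly q t" "t - r < 0" using assms(1)[of t] assms(3) by auto
    then show "0 \<le> - poly q t" by (simp add: zero_le_mult_iff)
  qed (use assms in auto)
  ultimately show ?thesis by simp
qed

lemma map_poly_of_real_add:
  "map_poly of_real (p + q) = map_poly of_real p + (map_poly of_real q :: 'a::{real_algebra_1,comm_ring_1} poly)"
  by (rule poly_eqI) (simp add: coeff_map_poly)

lemma map_poly_of_real_mult:
  "map_poly of_real (p * q) = map_poly of_real p * (map_poly of_real q :: 'a::{real_algebra_1,comm_ring_1} poly)"
proof (induct p)
  case (pCons a p)
  have "map_poly of_real (smult a q) = (smult (of_real a) (map_poly of_real q) :: 'a poly)"
    by (rule poly_eqI) (simp add: coeff_map_poly)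
  then show ?case using pCons by (simp add: map_poly_of_real_add map_poly_pCons)
qed simp

lemma poly_map_poly_of_real:
  "poly (map_poly of_real p) (of_real x) = (of_real (poly p x) :: 'a::{real_algebra_1,comm_ring_1})"
  by (induct p) (auto simp: map_poly_pCons)

lemma quadratic_factor_of_nonreal_root:
  fixes q :: "real poly" and z :: complex
  assumes root: "poly (map_poly of_real q) z = 0" and im: "Im z \<noteq> 0"
  shows "[:(Re z)^2 + (Im z)^2, -2 * Re z, 1:] dvd q"
proof -
  define d where "d = [:(Re z)^2 + (Im z)^2, -2 * Re z, 1:]"
  define r where "r = q mod d"
  have d0: "d \<noteq> 0" and dd: "degree d = 2" by (auto simp: d_def)
  have "poly (map_poly of_real d) z = 0"
    by (simp add: d_def map_poly_pCons complex_eq_iff power2_eq_square algebra_simps)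
  moreover have "poly (map_poly of_real q) z = poly (map_poly of_real (d * (q div d) + r)) z"
    unfolding r_def by simp
  then have "poly (map_poly of_real q) z
      = poly (map_poly of_real d) z * poly (map_poly of_real (q div d)) z + poly (map_poly of_real r) z"
    by (simp only: map_poly_of_real_add map_poly_of_real_mult poly_add poly_mult)
  ultimately have rz: "poly (map_poly of_real r) z = 0" using root by simp
  have "degree r \<le> 1" using degree_mod_less[OF d0, of q] dd unfolding r_def by auto
  then have rl: "r = [:coeff r 0, coeff r 1:]"
    by (intro poly_eqI) (auto simp: coeff_pCons coeff_eq_0 split: nat.splits)
  have "of_real (coeff r 0) + of_real (coeff r 1) * z = 0"
    using rz by (subst (asm) rl) (simp add: map_poly_pCons algebra_simps)
  then have "coeff r 1 = 0" "coeff r 0 = 0" using im by (auto simp: complex_eq_iff)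
  then have "r = 0" using rl by simp
  then show ?thesis unfolding d_def[symmetric] r_def by (simp add: mod_eq_0_iff_dvd)
qed

lemma real_poly_quadratic_factor:
  fixes q :: "real poly"
  assumes "degree q \<noteq> 0" "\<And>t. poly q t \<noteq> 0"
  obtains a b q1 where "b \<noteq> 0" "q = [:a^2 + b^2, -2 * a, 1:] * q1"
proof -
  have "degree (map_poly complex_of_real q) = degree q" by (rule degree_map_poly) simp
  then have "\<not> constant (poly (map_poly complex_of_real q))"
    using assms(1) by (simp add: constant_degree)
  then obtain z where z: "poly (map_poly complex_of_real q) z = 0"
    using fundamental_theorem_of_algebra by blast
  have "Im z \<noteq> 0"
  proof
    assume "Im z = 0"
    then have "z = of_real (Re z)" by (simp add: complex_eq_iff)
    then show False
      using z assms(2)[of "Re z"] poly_map_poly_of_real[where 'a=complex, of q "Re z"]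
      by (metis of_real_eq_0_iff)
  qed
  then show ?thesis using that quadratic_factor_of_nonreal_root[OF z] by (auto simp: dvd_def)
qed


lemma poly_nonneg_Icc_punctured:
  fixes p :: "real poly"
  assumes "\<And>t. t \<in> {-1..1} \<Longrightarrow> t \<noteq> r \<Longrightarrow> 0 \<le> poly p t" "t \<in> {-1..1}"
  shows "0 \<le> poly p t"
proof (cases "t = r")
  case True
  show ?thesis by (rule nonneg_at_limit_point[where S="{-1..1}"]) (use assms True in auto)
qed (use assms in auto)

lemma weighted_sos_double_root_step:
  fixes q q2 :: "real poly"
  assumes IH: "\<And>p. degree p < degree q \<Longrightarrow> (\<And>t. t \<in> {-1..1} \<Longrightarrow> 0 \<le> poly p t) \<Longrightarrow> weighted_sos p"
    and q: "q = [:-r, 1:] * [:-r, 1:] * q2" "q \<noteq> 0" and nonneg: "\<And>t. t \<in> {-1..1} \<Longrightarrow> 0 \<le> poly q t"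
  shows "weighted_sos q"
proof -
  have "0 \<le> poly q2 t" if "t \<in> {-1..1}" for t
  proof (rule poly_nonneg_Icc_punctured[OF _ that])
    fix t assume "t \<in> {-1..1}" "t \<noteq> r"
    then have "0 < (t - r)^2" by simp
    moreover have "0 \<le> (t - r)^2 * poly q2 t"
      using nonneg[of t] \<open>t \<in> {-1..1}\<close> by (simp add: q power2_eq_square algebra_simps)
    ultimately show "0 \<le> poly q2 t" by (simp add: zero_le_mult_iff)
  qed
  moreover have "degree q2 < degree q" using q by (auto simp: degree_mult_eq simp del: mult_pCons_left)
  ultimately have "weighted_sos q2" using IH by blast
  then show ?thesis unfolding q(1) by (rule weighted_sos_mult_square)
qed

lemma weighted_sos_real_root_step:
  fixes q q1 :: "real poly"
  assumes IH: "\<And>p. degree p < degree q \<Longrightarrow> (\<And>t. t \<in> {-1..1} \<Longrightarrow> 0 \<le> poly p t) \<Longrightarrow> weighted_sos p"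
    and q: "q = [:-r, 1:] * q1" "q \<noteq> 0" and nonneg: "\<And>t. t \<in> {-1..1} \<Longrightarrow> 0 \<le> poly q t"
  shows "weighted_sos q"
proof -
  have pq: "poly q t = (t - r) * poly q1 t" for t unfolding q(1) by (simp add: algebra_simps)
  have dq1: "degree q1 < degree q" using q by (auto simp: degree_mult_eq simp del: mult_pCons_left)
  consider "r \<le> -1" | "1 \<le> r" | "-1 < r" "r < 1" by linarith
  then show ?thesis
  proof cases
    case 1
    have "0 \<le> poly q1 t" if "t \<in> {-1..1}" for t
    proof (rule poly_nonneg_Icc_punctured[OF _ that])
      fix t assume "t \<in> {-1..1}" "t \<noteq> r"
      then have "0 < t - r" "0 \<le> (t - r) * poly q1 t" using 1 nonneg[of t] pq[of t] by auto
      then show "0 \<le> poly q1 t" by (simp add: zero_le_mult_iff)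
    qed
    then show ?thesis using IH[OF dq1] weighted_sos_mult_root_below[OF _ 1] q(1) by blast
  next
    case 2
    have "0 \<le> poly (- q1) t" if "t \<in> {-1..1}" for t
    proof (rule poly_nonneg_Icc_punctured[OF _ that])
      fix t assume "t \<in> {-1..1}" "t \<noteq> r"
      then have "t - r < 0" "0 \<le> (t - r) * poly q1 t" using 2 nonneg[of t] pq[of t] by auto
      then show "0 \<le> poly (- q1) t" by (simp add: zero_le_mult_iff)
    qed
    then have "weighted_sos (- q1)" using IH dq1 by simp
    then have "weighted_sos ([:r, -1:] * - q1)" by (rule weighted_sos_mult_root_above[OF _ 2])
    moreover have "[:r, -1:] * - q1 = q" unfolding q(1) by simp
    ultimately show ?thesis by (simp only:)
  next
    case 3
    have "poly q1 r = 0" using poly_interior_root_double[of r q1] 3 nonneg pq by simp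
    then obtain q2 where "q1 = [:-r, 1:] * q2" using poly_eq_0_iff_dvd dvd_def by metis
    then have "q = [:-r, 1:] * [:-r, 1:] * q2" using q(1) by (simp only: mult.assoc)
    then show ?thesis using weighted_sos_double_root_step[OF IH] q(2) nonneg by blast
  qed
qed

lemma weighted_sos_quadratic_factor_step:
  fixes q q1 :: "real poly"
  assumes IH: "\<And>p. degree p < degree q \<Longrightarrow> (\<And>t. t \<in> {-1..1} \<Longrightarrow> 0 \<le> poly p t) \<Longrightarrow> weighted_sos p"
    and q: "q = [:a^2 + b^2, -2 * a, 1:] * q1" "q \<noteq> 0" "b \<noteq> 0"
    and nonneg: "\<And>t. t \<in> {-1..1} \<Longrightarrow> 0 \<le> poly q t"
  shows "weighted_sos q"
proof -
  have pq: "poly q t = ((t - a)^2 + b^2) * poly q1 t" for t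
    unfolding q(1) by (simp add: power2_eq_square algebra_simps)
  have pos: "0 < (t - a)^2 + b^2" for t using q(3) by (simp add: add_nonneg_pos)
  have "0 \<le> poly q1 t" if "t \<in> {-1..1}" for t
    using nonneg[OF that] pq[of t] pos[of t] by (auto simp: zero_le_mult_iff)
  moreover have "degree q1 < degree q" using q by (simp add: degree_mult_eq del: mult_pCons_left)
  ultimately have "weighted_sos q1" using IH by blast
  have "q = [:-a, 1:] * [:-a, 1:] * q1 + smult (b^2) q1"
    by (rule poly_eq_poly_eq_iff[THEN iffD1]) (simp add: fun_eq_iff pq power2_eq_square algebra_simps)
  also have "weighted_sos \<dots>"
    using \<open>weighted_sos q1\<close> by (intro weighted_sos.add weighted_sos_mult_square weighted_sos_smult) auto
  finally show ?thesis .
qed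

lemma nonneg_on_Icc_imp_weighted_sos:
  fixes q :: "real poly"
  assumes "\<And>t. t \<in> {-1..1} \<Longrightarrow> 0 \<le> poly q t"
  shows "weighted_sos q"
  using assms
proof (induct "degree q" arbitrary: q rule: less_induct)
  case less
  have IH: "\<And>p. degree p < degree q \<Longrightarrow> (\<And>t. t \<in> {-1..1} \<Longrightarrow> 0 \<le> poly p t) \<Longrightarrow> weighted_sos p"
    using less.hyps by blast
  show ?case
  proof (cases "degree q = 0")
    case True
    then obtain c where c: "q = [:c:]" by (metis degree_eq_zeroE)
    then show ?thesis using less.prems[of 0] weighted_sos_const by simp
  next
    case False
    then have "q \<noteq> 0" by auto
    show ?thesis
    proof (cases "\<exists>r. poly q r = 0")
      case True
      then obtain r q1 where q: "q = [:-r, 1:] * q1" using poly_eq_0_iff_dvd dvd_def by metis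
      then show ?thesis using weighted_sos_real_root_step[OF IH q \<open>q \<noteq> 0\<close>] less.prems by blast
    next
      case no_root: False
      then obtain a b q1 where "b \<noteq> 0" "q = [:a^2 + b^2, -2 * a, 1:] * q1"
        using real_poly_quadratic_factor[OF False] by blast
      then show ?thesis
        using weighted_sos_quadratic_factor_step[OF IH] \<open>q \<noteq> 0\<close> less.prems by blast
    qed
  qed
qed


section \<open>Polynomials of a selfadjoint contraction\<close>

lemma contraction_quadratic_forms_nonneg:
  assumes "bounded_selfadjoint B" "\<And>x. norm (B x) \<le> norm x"
  shows "0 \<le> inner (y + B y) y" "0 \<le> inner (y - B y) y" "0 \<le> inner (y - B (B y)) y"
proof -
  have "\<bar>inner (B y) y\<bar> \<le> norm y * norm y"
    using Cauchy_Schwarz_ineq2[of "B y" y] assms(2)[of y] by (meson mult_right_mono norm_ge_zero order_trans)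
  then show "0 \<le> inner (y + B y) y" "0 \<le> inner (y - B y) y"
    by (simp_all add: inner_add_left inner_diff_left power2_norm_eq_inner[symmetric]
        power2_eq_square abs_le_iff)
  have "inner (B (B y)) y = inner (B y) (B y)" using assms(1) by (simp add: bounded_selfadjoint_def)
  then show "0 \<le> inner (y - B (B y)) y"
    using assms(2)[of y] by (simp add: inner_diff_left power2_norm_eq_inner[symmetric] power2_eq_square mult_mono)
qed

lemma weighted_sos_real_poly_op_nonneg:
  assumes B: "bounded_selfadjoint B" "\<And>x. norm (B x) \<le> norm x" and p: "weighted_sos p"
  shows "0 \<le> inner (real_poly_op p B x) x"
  using p
proof (induct p arbitrary: x rule: weighted_sos.induct)
  have lin: "linear B" using B(1) bounded_linear.linear by (auto simp: bounded_selfadjoint_def)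
  have sandwich: "0 \<le> inner (real_poly_op (s * s * w) B x) x"
    if w: "\<And>y. 0 \<le> inner (real_poly_op w B y) y" for s w x
  proof -
    have "real_poly_op (s * s * w) B x = real_poly_op s B (real_poly_op w B (real_poly_op s B x))"
      by (simp add: real_poly_op_mult[OF lin, symmetric] ac_simps)
    then have "inner (real_poly_op (s * s * w) B x) x
        = inner (real_poly_op w B (real_poly_op s B x)) (real_poly_op s B x)"
      using bounded_selfadjoint_real_poly_op[OF B(1), of s] by (simp add: bounded_selfadjoint_def)
    then show ?thesis using w by simp
  qed
  {
    case (square s x) show ?case using sandwich[where w=1 and s=s and x=x] by simp
  next
    case (square_1_plus s x) show ?case
      using sandwich[where w="[:1, 1:]" and s=s and x=x] contraction_quadratic_forms_nonneg[OF B]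
      by (simp add: real_poly_op_pCons[OF lin] linear_0[OF lin])
  next
    case (square_1_minus s x) show ?case
      using sandwich[where w="[:1, -1:]" and s=s and x=x] contraction_quadratic_forms_nonneg[OF B]
      by (simp add: real_poly_op_pCons[OF lin] linear_neg[OF lin] linear_0[OF lin])
  next
    case (square_1_minus_sq s x) show ?case
      using sandwich[where w="[:1, 0, -1:]" and s=s and x=x] contraction_quadratic_forms_nonneg[OF B]
      by (simp add: real_poly_op_pCons[OF lin] linear_neg[OF lin] linear_0[OF lin])
  next
    case (add p q x) then show ?case by (simp add: real_poly_op_add inner_add_left)
  }
qed

lemma real_poly_op_nonneg:
  assumes "bounded_selfadjoint B" "\<And>x. norm (B x) \<le> norm x" "\<And>t. t \<in> {-1..1} \<Longrightarrow> 0 \<le> poly q t"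
  shows "0 \<le> inner (real_poly_op q B x) x"
  using weighted_sos_real_poly_op_nonneg[OF assms(1,2) nonneg_on_Icc_imp_weighted_sos[OF assms(3)]] .

text \<open>The operator \<open>X + \<i> Y\<close> on the complexification \<open>H \<times> H\<close>, with \<open>(u, v)\<close> standing for \<open>u + \<i> v\<close>.\<close>

definition complexify :: "('a::real_vector \<Rightarrow> 'a) \<Rightarrow> ('a \<Rightarrow> 'a) \<Rightarrow> 'a \<times> 'a \<Rightarrow> 'a \<times> 'a" where
  "complexify X Y w = (X (fst w) - Y (snd w), X (snd w) + Y (fst w))"

lemma norm_complexify_real_poly_op_le:
  fixes B :: "'a::real_inner \<Rightarrow> 'a"
  assumes B: "bounded_selfadjoint B" "\<And>x. norm (B x) \<le> norm x"
    and M: "0 \<le> M" "\<And>t. t \<in> {-1..1} \<Longrightarrow> (poly u t)^2 + (poly v t)^2 \<le> M^2"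
  shows "norm (complexify (real_poly_op u B) (real_poly_op v B) w) \<le> M * norm w"
proof -
  have lin: "linear B" using B(1) bounded_linear.linear by (auto simp: bounded_selfadjoint_def)
  define U where "U = real_poly_op u B"
  define V where "V = real_poly_op v B"
  have symU: "\<And>x y. inner (U x) y = inner x (U y)" and symV: "\<And>x y. inner (V x) y = inner x (V y)"
    using bounded_selfadjoint_real_poly_op[OF B(1)] by (auto simp: U_def V_def bounded_selfadjoint_def)
  have comm: "U (V x) = V (U x)" for x
    unfolding U_def V_def by (simp add: real_poly_op_mult[OF lin, symmetric] mult.commute)
  \<comment> \<open>\<open>M\<^sup>2 - u\<^sup>2 - v\<^sup>2 \<ge> 0\<close> on [-1, 1], so \<open>M\<^sup>2 - U\<^sup>2 - V\<^sup>2\<close> is a positive operator.\<close>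
  have UV: "inner (U x) (U x) + inner (V x) (V x) \<le> M^2 * inner x x" for x
  proof -
    have "0 \<le> poly ([:M^2:] - u * u - v * v) t" if "t \<in> {-1..1}" for t
      using M(2)[OF that] by (simp add: power2_eq_square)
    then have "0 \<le> inner (real_poly_op ([:M^2:] - u * u - v * v) B x) x"
      by (rule real_poly_op_nonneg[OF B])
    then show ?thesis
      by (simp add: real_poly_op_diff real_poly_op_mult[OF lin] inner_diff_left symU symV
          flip: U_def V_def)
  qed
  obtain x y where w: "w = (x, y)" by (cases w)
  have "inner (U x) (V y) = inner (U y) (V x)"
    by (metis comm inner_commute symU symV)
  then have "norm (complexify U V w)^2 = (inner (U x) (U x) + inner (V x) (V x)) + (inner (U y) (U y) + inner (V y) (V y))"
    by (simp add: complexify_def w norm_Pair power2_norm_eq_inner inner_diff inner_add inner_commute algebra_simps)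
  also have "\<dots> \<le> (M * norm w)^2"
    using UV[of x] UV[of y] by (simp add: w norm_Pair power_mult_distrib power2_norm_eq_inner algebra_simps)
  finally show ?thesis unfolding U_def V_def using M(1) by (simp add: power2_le_iff_abs_le)
qed

lemma norm_real_poly_op_le:
  fixes B :: "'a::real_inner \<Rightarrow> 'a"
  assumes B: "bounded_selfadjoint B" "\<And>x. norm (B x) \<le> norm x"
    and M: "\<And>t. t \<in> {-1..1} \<Longrightarrow> \<bar>poly u t\<bar> \<le> M"
  shows "norm (real_poly_op u B x) \<le> M * norm x"
proof -
  have "0 \<le> M" using M[of 0] by simp
  moreover have "\<And>t. t \<in> {-1..1} \<Longrightarrow> (poly u t)^2 + (poly 0 t)^2 \<le> M^2"
    using M \<open>0 \<le> M\<close> by (simp add: power2_le_iff_abs_le)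
  ultimately have "norm (complexify (real_poly_op u B) (real_poly_op 0 B) (x, 0)) \<le> M * norm (x, 0::'a)"
    by (rule norm_complexify_real_poly_op_le[OF B])
  moreover have "real_poly_op u B 0 = 0"
    using B(1) bounded_linear_real_poly_op linear_0 bounded_linear.linear
    by (metis bounded_selfadjoint_def)
  ultimately show ?thesis by (simp add: complexify_def norm_Pair)
qed

section \<open>Continuous functional calculus of a selfadjoint contraction\<close>

lemma polynomials_function_ring: "function_ring_on {f. \<exists>p::real poly. f = poly p} {-1..1::real}"
proof unfold_locales
  fix f g assume "f \<in> {f. \<exists>p::real poly. f = poly p}" "g \<in> {f. \<exists>p::real poly. f = poly p}"
  then obtain p q where "f = poly p" "g = poly q" by blast
  then show "(\<lambda>x. f x + g x) \<in> {f. \<exists>p::real poly. f = poly p}"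
    by (auto intro!: exI[of _ "p + q"])
  from \<open>f = poly p\<close> \<open>g = poly q\<close> show "(\<lambda>x. f x * g x) \<in> {f. \<exists>p::real poly. f = poly p}"
    by (auto intro!: exI[of _ "p * q"])
next
  fix c :: real show "(\<lambda>_. c) \<in> {f. \<exists>p::real poly. f = poly p}" by (auto intro!: exI[of _ "[:c:]"])
next
  fix x y :: real assume "x \<noteq> y"
  then show "\<exists>f\<in>{f. \<exists>p::real poly. f = poly p}. f x \<noteq> f y" by (intro bexI[of _ "poly [:0, 1:]"]) auto
qed (auto intro: continuous_intros)

lemma exists_poly_approx:
  fixes h :: "real \<Rightarrow> real"
  assumes "continuous_on {-1..1} h" "e > 0"
  shows "\<exists>p. \<forall>t\<in>{-1..1}. \<bar>poly p t - h t\<bar> \<le> e"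
proof -
  interpret function_ring_on "{f. \<exists>p::real poly. f = poly p}" "{-1..1::real}"
    by (rule polynomials_function_ring)
  obtain p where "\<forall>t\<in>{-1..1}. \<bar>h t - poly p t\<bar> < e"
    using Stone_Weierstrass_basic[OF assms] by blast
  then show ?thesis by (metis abs_minus_commute less_imp_le)
qed

definition poly_approx :: "(real \<Rightarrow> real) \<Rightarrow> nat \<Rightarrow> real poly" where
  "poly_approx h k = (SOME p. \<forall>t\<in>{-1..1}. \<bar>poly p t - h t\<bar> \<le> 1 / (real k + 1))"

lemma poly_approx_error:
  assumes "continuous_on {-1..1} h" "t \<in> {-1..1}"
  shows "\<bar>poly (poly_approx h k) t - h t\<bar> \<le> 1 / (real k + 1)"
proof -
  have "\<exists>p. \<forall>t\<in>{-1..1}. \<bar>poly p t - h t\<bar> \<le> 1 / (real k + 1)"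
    by (rule exists_poly_approx[OF assms(1)]) simp
  then have "\<forall>t\<in>{-1..1}. \<bar>poly (poly_approx h k) t - h t\<bar> \<le> 1 / (real k + 1)"
    unfolding poly_approx_def by (rule someI_ex)
  then show ?thesis using assms(2) by blast
qed

lemma continuous_on_Icc_bounded:
  fixes h :: "real \<Rightarrow> real"
  assumes "continuous_on {-1..1} h"
  shows "\<exists>M. \<forall>t\<in>{-1..1}. \<bar>h t\<bar> \<le> M"
  using compact_imp_bounded[OF compact_continuous_image[OF assms compact_Icc]] by (auto simp: bounded_real)

lemma abs_mult_diff_le:
  fixes a b c d e :: real
  assumes "\<bar>a - c\<bar> \<le> e" "\<bar>b - d\<bar> \<le> e" "\<bar>c\<bar> \<le> M" "\<bar>d\<bar> \<le> N" "e \<le> 1"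
  shows "\<bar>a * b - c * d\<bar> \<le> (M + 1 + N) * e"
proof -
  have "\<bar>a * b - c * d\<bar> = \<bar>a * (b - d) + d * (a - c)\<bar>" by (simp add: algebra_simps)
  also have "\<dots> \<le> \<bar>a\<bar> * \<bar>b - d\<bar> + \<bar>d\<bar> * \<bar>a - c\<bar>" by (simp add: abs_mult[symmetric] abs_triangle_ineq)
  also have "\<dots> \<le> (M + 1) * e + N * e"
    using assms by (intro add_mono mult_mono) auto
  finally show ?thesis by (simp add: algebra_simps)
qed

text \<open>\<open>cfc h B\<close> is \<open>h(B)\<close>, for \<open>h\<close> continuous on [-1, 1] (which contains the spectrum of a
  selfadjoint contraction \<open>B\<close>), defined as the limit of polynomials in \<open>B\<close>.\<close>

definition cfc :: "(real \<Rightarrow> real) \<Rightarrow> ('a::real_normed_vector \<Rightarrow> 'a) \<Rightarrow> 'a \<Rightarrow> 'a" where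
  "cfc h B x = lim (\<lambda>k. real_poly_op (poly_approx h k) B x)"

lemma tendsto_op_apply:
  fixes P :: "nat \<Rightarrow> 'a::real_normed_vector \<Rightarrow> 'b::real_normed_vector"
  assumes lin: "\<And>k. linear (P k)" and bound: "\<And>k y. norm (P k y) \<le> M * norm y"
    and approx: "\<And>k y. norm (P k y - H y) \<le> d k * norm y" and "d \<longlonglongrightarrow> 0" and v: "v \<longlonglongrightarrow> w"
  shows "(\<lambda>k. P k (v k)) \<longlonglongrightarrow> H w"
proof -
  have "(\<lambda>k. P k (v k) - H w) \<longlonglongrightarrow> 0"
  proof (rule Lim_null_comparison)
    show "\<forall>\<^sub>F k in sequentially. norm (P k (v k) - H w) \<le> M * norm (v k - w) + d k * norm w"
    proof (intro always_eventually allI)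
      fix k
      have "P k (v k) - H w = P k (v k - w) + (P k w - H w)"
        by (simp add: linear_diff[OF lin])
      then show "norm (P k (v k) - H w) \<le> M * norm (v k - w) + d k * norm w"
        by (metis add_mono approx bound norm_triangle_le)
    qed
    have "(\<lambda>k. norm (v k - w)) \<longlonglongrightarrow> 0" using v by (simp add: LIM_zero_iff tendsto_norm_zero)
    then show "(\<lambda>k. M * norm (v k - w) + d k * norm w) \<longlonglongrightarrow> 0"
      using tendsto_add[OF tendsto_mult_right_zero tendsto_mult_left_zero[OF assms(4)]] by simp
  qed
  then show ?thesis by (simp add: LIM_zero_iff)
qed

locale selfadjoint_contraction =
  fixes B :: "'a::{real_inner,complete_space} \<Rightarrow> 'a"
  assumes selfadjoint: "bounded_selfadjoint B" and contraction: "\<And>x. norm (B x) \<le> norm x"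
begin

lemma bounded_linear_B: "bounded_linear B"
  using selfadjoint by (simp add: bounded_selfadjoint_def)

lemma linear_B: "linear B"
  using bounded_linear_B bounded_linear.linear by blast

lemma linear_real_poly_op: "linear (real_poly_op p B)"
  using bounded_linear_real_poly_op[OF bounded_linear_B] bounded_linear.linear by blast

lemma norm_real_poly_op_diff_le:
  assumes "\<And>t. t \<in> {-1..1} \<Longrightarrow> \<bar>poly p t - poly q t\<bar> \<le> e"
  shows "norm (real_poly_op p B x - real_poly_op q B x) \<le> e * norm x"
  using norm_real_poly_op_le[OF selfadjoint contraction, of "p - q" e x] assms
  by (simp add: real_poly_op_diff)

lemma tendsto_cfc:
  assumes h: "continuous_on {-1..1} h"
  shows "(\<lambda>k. real_poly_op (poly_approx h k) B x) \<longlonglongrightarrow> cfc h B x"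
proof -
  have "Cauchy (\<lambda>k. real_poly_op (poly_approx h k) B x)"
  proof (rule metric_CauchyI)
    fix e :: real assume e: "e > 0"
    obtain N :: nat where N: "2 * (norm x + 1) / e < real N" using reals_Archimedean2 by blast
    have "dist (real_poly_op (poly_approx h m) B x) (real_poly_op (poly_approx h n) B x) < e"
      if mn: "N \<le> m" "N \<le> n" for m n
    proof -
      have "\<bar>poly (poly_approx h m) t - poly (poly_approx h n) t\<bar> \<le> 2 / (real N + 1)"
        if "t \<in> {-1..1}" for t
        using poly_approx_error[OF h that, of m] poly_approx_error[OF h that, of n] mn
          frac_le[of 1 1 "real N + 1" "real m + 1"] frac_le[of 1 1 "real N + 1" "real n + 1"]
        by simp
      then have "dist (real_poly_op (poly_approx h m) B x) (real_poly_op (poly_approx h n) B x)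
          \<le> 2 / (real N + 1) * norm x"
        unfolding dist_norm by (rule norm_real_poly_op_diff_le)
      also have "\<dots> < e" using N e by (simp add: field_simps)
      finally show ?thesis .
    qed
    then show "\<exists>N. \<forall>m\<ge>N. \<forall>n\<ge>N. dist (real_poly_op (poly_approx h m) B x) (real_poly_op (poly_approx h n) B x) < e"
      by blast
  qed
  then show ?thesis
    unfolding cfc_def by (simp add: Cauchy_convergent_iff convergent_LIMSEQ_iff)
qed

lemma norm_real_poly_op_cfc_le:
  assumes h: "continuous_on {-1..1} h" and p: "\<And>t. t \<in> {-1..1} \<Longrightarrow> \<bar>poly p t - h t\<bar> \<le> e"
  shows "norm (real_poly_op p B x - cfc h B x) \<le> e * norm x"
proof (rule tendsto_le[OF sequentially_bot])
  show "(\<lambda>k. norm (real_poly_op p B x - real_poly_op (poly_approx h k) B x))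
      \<longlonglongrightarrow> norm (real_poly_op p B x - cfc h B x)"
    by (intro tendsto_intros tendsto_cfc h)
  show "(\<lambda>k. (e + 1 / (real k + 1)) * norm x) \<longlonglongrightarrow> e * norm x"
    using tendsto_mult[OF tendsto_add[OF tendsto_const inverse_Suc_tendsto_0] tendsto_const] by simp
  show "\<forall>\<^sub>F k in sequentially. norm (real_poly_op p B x - real_poly_op (poly_approx h k) B x)
      \<le> (e + 1 / (real k + 1)) * norm x"
    using p poly_approx_error[OF h]
    by (intro always_eventually allI norm_real_poly_op_diff_le) (smt (verit))
qed

lemma tendsto_cfcI:
  assumes h: "continuous_on {-1..1} h" and d: "d \<longlonglongrightarrow> 0"
    and p: "\<And>k t. t \<in> {-1..1} \<Longrightarrow> \<bar>poly (p k) t - h t\<bar> \<le> d k"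
  shows "(\<lambda>k. real_poly_op (p k) B x) \<longlonglongrightarrow> cfc h B x"
proof -
  have "(\<lambda>k. real_poly_op (p k) B x - cfc h B x) \<longlonglongrightarrow> 0"
  proof (rule Lim_null_comparison)
    show "\<forall>\<^sub>F k in sequentially. norm (real_poly_op (p k) B x - cfc h B x) \<le> d k * norm x"
      by (intro always_eventually allI norm_real_poly_op_cfc_le[OF h p])
    show "(\<lambda>k. d k * norm x) \<longlonglongrightarrow> 0" by (rule tendsto_mult_left_zero[OF d])
  qed
  then show ?thesis by (simp add: LIM_zero_iff)
qed

lemma cfc_poly: "cfc (poly p) B x = real_poly_op p B x"
  using norm_real_poly_op_cfc_le[of "poly p" p 0 x] by (simp add: continuous_intros)

lemma cfc_const: "cfc (\<lambda>t. c) B x = c *\<^sub>R x"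
proof -
  have "poly [:c:] = (\<lambda>t::real. c)" by (rule ext) simp
  then show ?thesis using cfc_poly[of "[:c:]" x] by simp
qed

lemma cfc_ident: "cfc (\<lambda>t. t) B x = B x"
proof -
  have "poly [:0, 1:] = (\<lambda>t::real. t)" by (rule ext) simp
  then show ?thesis using cfc_poly[of "[:0, 1:]" x] by (simp add: real_poly_op_def)
qed

lemma norm_cfc_le:
  assumes h: "continuous_on {-1..1} h" and M: "\<And>t. t \<in> {-1..1} \<Longrightarrow> \<bar>h t\<bar> \<le> M"
  shows "norm (cfc h B x) \<le> M * norm x"
proof (rule tendsto_le[OF sequentially_bot])
  show "(\<lambda>k. norm (real_poly_op (poly_approx h k) B x)) \<longlonglongrightarrow> norm (cfc h B x)"
    by (intro tendsto_intros tendsto_cfc h)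
  show "(\<lambda>k. (M + 1 / (real k + 1)) * norm x) \<longlonglongrightarrow> M * norm x"
    using tendsto_mult[OF tendsto_add[OF tendsto_const inverse_Suc_tendsto_0] tendsto_const] by simp
  show "\<forall>\<^sub>F k in sequentially. norm (real_poly_op (poly_approx h k) B x) \<le> (M + 1 / (real k + 1)) * norm x"
    using M poly_approx_error[OF h]
    by (intro always_eventually allI norm_real_poly_op_le[OF selfadjoint contraction]) (smt (verit))
qed

lemma cfc_cong:
  assumes h: "continuous_on {-1..1} h" and eq: "\<And>t. t \<in> {-1..1} \<Longrightarrow> g t = h t"
  shows "cfc g B x = cfc h B x"
proof -
  have g: "continuous_on {-1..1} g" using h eq continuous_on_cong by (metis (no_types, lifting))
  have "(\<lambda>k. real_poly_op (poly_approx g k) B x) \<longlonglongrightarrow> cfc h B x"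
    by (rule tendsto_cfcI[OF h inverse_Suc_tendsto_0]) (use poly_approx_error[OF g] eq in auto)
  then show ?thesis using tendsto_cfc[OF g] LIMSEQ_unique by blast
qed

lemma cfc_add:
  assumes h: "continuous_on {-1..1} h" and g: "continuous_on {-1..1} g"
  shows "cfc (\<lambda>t. h t + g t) B x = cfc h B x + cfc g B x"
proof -
  have "(\<lambda>k. real_poly_op (poly_approx h k + poly_approx g k) B x) \<longlonglongrightarrow> cfc (\<lambda>t. h t + g t) B x"
  proof (rule tendsto_cfcI)
    show "(\<lambda>k. 2 * (1 / (real k + 1))) \<longlonglongrightarrow> 0"
      by (rule tendsto_mult_right_zero[OF inverse_Suc_tendsto_0])
    fix k and t :: real assume t: "t \<in> {-1..1}"
    show "\<bar>poly (poly_approx h k + poly_approx g k) t - (h t + g t)\<bar> \<le> 2 * (1 / (real k + 1))"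
      using poly_approx_error[OF h t, of k] poly_approx_error[OF g t, of k] by simp
  qed (intro continuous_intros h g)
  moreover have "(\<lambda>k. real_poly_op (poly_approx h k + poly_approx g k) B x) \<longlonglongrightarrow> cfc h B x + cfc g B x"
    unfolding real_poly_op_add by (intro tendsto_add tendsto_cfc h g)
  ultimately show ?thesis using LIMSEQ_unique by blast
qed

lemma cfc_scale:
  assumes h: "continuous_on {-1..1} h"
  shows "cfc (\<lambda>t. c * h t) B x = c *\<^sub>R cfc h B x"
proof -
  have "(\<lambda>k. real_poly_op (smult c (poly_approx h k)) B x) \<longlonglongrightarrow> cfc (\<lambda>t. c * h t) B x"
  proof (rule tendsto_cfcI)
    show "(\<lambda>k. \<bar>c\<bar> * (1 / (real k + 1))) \<longlonglongrightarrow> 0"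
      by (rule tendsto_mult_right_zero[OF inverse_Suc_tendsto_0])
    fix k and t :: real assume t: "t \<in> {-1..1}"
    show "\<bar>poly (smult c (poly_approx h k)) t - c * h t\<bar> \<le> \<bar>c\<bar> * (1 / (real k + 1))"
      using mult_left_mono[OF poly_approx_error[OF h t, of k], of "\<bar>c\<bar>"]
      by (simp add: abs_mult[symmetric] algebra_simps)
  qed (intro continuous_intros h)
  moreover have "(\<lambda>k. real_poly_op (smult c (poly_approx h k)) B x) \<longlonglongrightarrow> c *\<^sub>R cfc h B x"
    unfolding real_poly_op_smult by (intro tendsto_scaleR tendsto_const tendsto_cfc h)
  ultimately show ?thesis using LIMSEQ_unique by blast
qed

lemma cfc_diff:
  assumes h: "continuous_on {-1..1} h" and g: "continuous_on {-1..1} g"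
  shows "cfc (\<lambda>t. h t - g t) B x = cfc h B x - cfc g B x"
proof -
  have "continuous_on {-1..1} (\<lambda>t. (-1) * g t)" by (intro continuous_intros g)
  then have "cfc (\<lambda>t. h t + (-1) * g t) B x = cfc h B x + cfc (\<lambda>t. (-1) * g t) B x"
    by (rule cfc_add[OF h])
  then show ?thesis using cfc_scale[OF g, of "-1" x] by simp
qed

lemma bounded_linear_cfc:
  assumes h: "continuous_on {-1..1} h"
  shows "bounded_linear (cfc h B)"
proof -
  obtain M where M: "\<And>t. t \<in> {-1..1} \<Longrightarrow> \<bar>h t\<bar> \<le> M"
    using continuous_on_Icc_bounded[OF h] by blast
  show ?thesis
  proof (rule bounded_linear_intro)
    fix x y and c :: real
    show "cfc h B (x + y) = cfc h B x + cfc h B y"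
      using tendsto_add[OF tendsto_cfc[OF h, of x] tendsto_cfc[OF h, of y]] tendsto_cfc[OF h, of "x + y"]
      by (simp add: linear_add[OF linear_real_poly_op] LIMSEQ_unique)
    show "cfc h B (c *\<^sub>R x) = c *\<^sub>R cfc h B x"
      using tendsto_scaleR[OF tendsto_const[of c] tendsto_cfc[OF h, of x]] tendsto_cfc[OF h, of "c *\<^sub>R x"]
      by (simp add: linear_scale[OF linear_real_poly_op] LIMSEQ_unique)
    show "norm (cfc h B x) \<le> norm x * M" using norm_cfc_le[OF h M] by (simp add: mult.commute)
  qed
qed

lemma cfc_symmetric:
  assumes h: "continuous_on {-1..1} h"
  shows "inner (cfc h B x) y = inner x (cfc h B y)"
proof -
  have "inner (real_poly_op p B x) y = inner x (real_poly_op p B y)" for p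
    using bounded_selfadjoint_real_poly_op[OF selfadjoint] by (simp add: bounded_selfadjoint_def)
  moreover have "(\<lambda>k. inner (real_poly_op (poly_approx h k) B x) y) \<longlonglongrightarrow> inner (cfc h B x) y"
    and "(\<lambda>k. inner x (real_poly_op (poly_approx h k) B y)) \<longlonglongrightarrow> inner x (cfc h B y)"
    by (intro tendsto_intros tendsto_cfc h)+
  ultimately show ?thesis using LIMSEQ_unique by simp
qed

lemma bounded_selfadjoint_cfc: "continuous_on {-1..1} h \<Longrightarrow> bounded_selfadjoint (cfc h B)"
  by (simp add: bounded_selfadjoint_def bounded_linear_cfc cfc_symmetric)

lemma cfc_commute:
  assumes h: "continuous_on {-1..1} h" and C: "bounded_linear C" "\<And>x. B (C x) = C (B x)"
  shows "cfc h B (C x) = C (cfc h B x)"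
proof -
  have "(\<lambda>k. C (real_poly_op (poly_approx h k) B x)) \<longlonglongrightarrow> C (cfc h B x)"
    by (rule bounded_linear.tendsto[OF C(1) tendsto_cfc[OF h]])
  moreover have "C (real_poly_op (poly_approx h k) B x) = real_poly_op (poly_approx h k) B (C x)" for k
    by (rule real_poly_op_commute[symmetric]) (use C bounded_linear.linear in auto)
  ultimately show ?thesis using tendsto_cfc[OF h, of "C x"] LIMSEQ_unique by fastforce
qed


lemma cfc_mult:
  assumes h: "continuous_on {-1..1} h" and g: "continuous_on {-1..1} g"
  shows "cfc (\<lambda>t. h t * g t) B x = cfc h B (cfc g B x)"
proof -
  obtain Mh where Mh: "\<And>t. t \<in> {-1..1} \<Longrightarrow> \<bar>h t\<bar> \<le> Mh"
    using continuous_on_Icc_bounded[OF h] by blast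
  obtain Mg where Mg: "\<And>t. t \<in> {-1..1} \<Longrightarrow> \<bar>g t\<bar> \<le> Mg"
    using continuous_on_Icc_bounded[OF g] by blast
  define e where "e = (\<lambda>k::nat. 1 / (real k + 1))"
  have e: "e \<longlonglongrightarrow> 0" "\<And>k. e k \<le> 1" by (auto simp: e_def inverse_Suc_tendsto_0)
  have ph: "\<bar>poly (poly_approx h k) t - h t\<bar> \<le> e k" and pg: "\<bar>poly (poly_approx g k) t - g t\<bar> \<le> e k"
    if "t \<in> {-1..1}" for k t
    using poly_approx_error[OF h that] poly_approx_error[OF g that] by (auto simp: e_def)
  have prod: "(\<lambda>k. real_poly_op (poly_approx h k * poly_approx g k) B x) \<longlonglongrightarrow> cfc (\<lambda>t. h t * g t) B x"
  proof (rule tendsto_cfcI)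
    show "(\<lambda>k. (Mh + 1 + Mg) * e k) \<longlonglongrightarrow> 0" by (rule tendsto_mult_right_zero[OF e(1)])
    show "\<bar>poly (poly_approx h k * poly_approx g k) t - h t * g t\<bar> \<le> (Mh + 1 + Mg) * e k"
      if "t \<in> {-1..1}" for k t
      using abs_mult_diff_le[OF ph[OF that] pg[OF that] Mh[OF that] Mg[OF that] e(2)] by simp
  qed (intro continuous_intros h g)
  have "(\<lambda>k. real_poly_op (poly_approx h k * poly_approx g k) B x) \<longlonglongrightarrow> cfc h B (cfc g B x)"
    unfolding real_poly_op_mult[OF linear_B]
  proof (rule tendsto_op_apply[OF linear_real_poly_op _ _ e(1) tendsto_cfc[OF g]])
    show "norm (real_poly_op (poly_approx h k) B y) \<le> (Mh + 1) * norm y" for k y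
    proof (rule norm_real_poly_op_le[OF selfadjoint contraction])
      fix t :: real assume t: "t \<in> {-1..1}"
      show "\<bar>poly (poly_approx h k) t\<bar> \<le> Mh + 1"
        using ph[OF t, of k] Mh[OF t] e(2)[of k] by (auto simp: abs_le_iff)
    qed
    show "norm (real_poly_op (poly_approx h k) B y - cfc h B y) \<le> e k * norm y" for k y
      using ph by (intro norm_real_poly_op_cfc_le[OF h])
  qed
  then show ?thesis using LIMSEQ_unique[OF prod] by simp
qed

lemma positive_op_cfc:
  assumes h: "continuous_on {-1..1} h" and nonneg: "\<And>t. t \<in> {-1..1} \<Longrightarrow> 0 \<le> h t"
  shows "positive_op (cfc h B)"
proof -
  have s: "continuous_on {-1..1} (\<lambda>t. sqrt (h t))" by (intro continuous_intros h)
  have "cfc h B x = cfc (\<lambda>t. sqrt (h t)) B (cfc (\<lambda>t. sqrt (h t)) B x)" for x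
  proof -
    have "cfc h B x = cfc (\<lambda>t. sqrt (h t) * sqrt (h t)) B x"
      by (rule cfc_cong[symmetric]) (use h nonneg in auto)
    also have "\<dots> = cfc (\<lambda>t. sqrt (h t)) B (cfc (\<lambda>t. sqrt (h t)) B x)"
      by (rule cfc_mult[OF s s])
    finally show ?thesis .
  qed
  then have "inner (cfc h B x) x = inner (cfc (\<lambda>t. sqrt (h t)) B x) (cfc (\<lambda>t. sqrt (h t)) B x)" for x
    by (simp add: cfc_symmetric[OF s])
  then show ?thesis by (simp add: positive_op_def bounded_selfadjoint_cfc[OF h])
qed

lemma onorm_cfc_le:
  assumes h: "continuous_on {-1..1} h" and M: "\<And>t. t \<in> {-1..1} \<Longrightarrow> \<bar>h t\<bar> \<le> M"
  shows "onorm (cfc h B) \<le> M"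
  using M[of 0] by (intro onorm_bound norm_cfc_le[OF h M]) auto

end

section \<open>Complex-valued functional calculus\<close>

lemma bounded_linear_complexify:
  fixes X Y :: "'a::real_normed_vector \<Rightarrow> 'a"
  assumes "bounded_linear X" "bounded_linear Y"
  shows "bounded_linear (complexify X Y)"
  unfolding complexify_def[abs_def]
  by (intro bounded_linear_Pair bounded_linear_sub bounded_linear_add
      bounded_linear_compose[OF assms(1) bounded_linear_fst] bounded_linear_compose[OF assms(1) bounded_linear_snd]
      bounded_linear_compose[OF assms(2) bounded_linear_fst] bounded_linear_compose[OF assms(2) bounded_linear_snd])

lemma norm_Pair_le_scaleR:
  fixes a b x y :: "'a::real_normed_vector"
  assumes "norm a \<le> c * norm x" "norm b \<le> c * norm y" "0 \<le> c"
  shows "norm (a, b) \<le> c * norm (x, y)"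
proof -
  have "norm (a, b) \<le> norm (c *\<^sub>R x, c *\<^sub>R y)"
    using assms unfolding norm_Pair by (intro real_sqrt_le_mono add_mono power_mono) auto
  then show ?thesis using assms(3) by (simp flip: scaleR_Pair)
qed

lemma norm_complexify_le:
  fixes X Y :: "'a::real_normed_vector \<Rightarrow> 'a"
  assumes "\<And>x. norm (X x) \<le> a * norm x" "\<And>x. norm (Y x) \<le> b * norm x" "0 \<le> a" "0 \<le> b"
  shows "norm (complexify X Y w) \<le> (a + b) * norm w"
proof -
  obtain x y where w: "w = (x, y)" by (cases w)
  have "norm (complexify X Y w) \<le> norm (X x, X y) + norm (- Y y, Y x)"
    using norm_triangle_ineq[of "(X x, X y)" "(- Y y, Y x)"] by (simp add: complexify_def w)
  also have "norm (X x, X y) \<le> a * norm w"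
    unfolding w by (rule norm_Pair_le_scaleR[OF assms(1) assms(1) assms(3)])
  also have "norm (- Y y, Y x) \<le> b * norm (y, x)"
    using assms(2)[of y] by (intro norm_Pair_le_scaleR[OF _ assms(2) assms(4)]) simp
  also have "norm (y, x) = norm w" by (simp add: w norm_Pair add.commute)
  finally show ?thesis by (simp add: algebra_simps)
qed

lemma onorm_le_onorm_complexify:
  fixes X Y :: "'a::real_normed_vector \<Rightarrow> 'a"
  assumes "bounded_linear X" "bounded_linear Y"
  shows "onorm X \<le> onorm (complexify X Y)" "onorm Y \<le> onorm (complexify X Y)"
proof -
  have bl: "bounded_linear (complexify X Y)" by (rule bounded_linear_complexify[OF assms])
  have "X 0 = 0" "Y 0 = 0" using assms linear_0 bounded_linear.linear by blast+
  then have c: "complexify X Y (x, 0) = (X x, Y x)" for x by (simp add: complexify_def)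
  have n: "norm (X x, Y x) \<le> onorm (complexify X Y) * norm x" for x
    using onorm[OF bl, of "(x, 0)"] by (simp add: c norm_Pair)
  show "onorm X \<le> onorm (complexify X Y)"
  proof (rule onorm_bound[OF onorm_pos_le[OF bl]])
    show "norm (X x) \<le> onorm (complexify X Y) * norm x" for x
      using n[of x] order_trans[OF real_le_rsqrt[of "norm (X x)" "norm (X x)^2 + norm (Y x)^2"]]
      by (simp add: norm_Pair)
  qed
  show "onorm Y \<le> onorm (complexify X Y)"
  proof (rule onorm_bound[OF onorm_pos_le[OF bl]])
    show "norm (Y x) \<le> onorm (complexify X Y) * norm x" for x
      using n[of x] order_trans[OF real_le_rsqrt[of "norm (Y x)" "norm (X x)^2 + norm (Y x)^2"]]
      by (simp add: norm_Pair)
  qed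
qed

lemma onorm_complexify_le:
  fixes X Y :: "'a::real_normed_vector \<Rightarrow> 'a"
  assumes "bounded_linear X" "bounded_linear Y"
  shows "onorm (complexify X Y) \<le> onorm X + onorm Y"
  using onorm_pos_le[OF assms(1)] onorm_pos_le[OF assms(2)]
  by (intro onorm_bound norm_complexify_le onorm[OF assms(1)] onorm[OF assms(2)]) simp_all

lemma complexify_diff:
  "complexify X Y w - complexify X' Y' w = complexify (\<lambda>x. X x - X' x) (\<lambda>x. Y x - Y' x) w"
  by (simp add: complexify_def algebra_simps)

definition cfc_complex :: "(real \<Rightarrow> complex) \<Rightarrow> ('a::real_normed_vector \<Rightarrow> 'a) \<Rightarrow> 'a \<times> 'a \<Rightarrow> 'a \<times> 'a" where
  "cfc_complex h B = complexify (cfc (\<lambda>t. Re (h t)) B) (cfc (\<lambda>t. Im (h t)) B)"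

lemma funpow_cext: "(cext B ^^ k) w = ((B ^^ k) (fst w), (B ^^ k) (snd w))"
  by (induct k arbitrary: w) (auto simp: cext_def)

lemma poly_op_eq_complexify:
  "poly_op p (cext B) = complexify (real_poly_op (map_poly Re p) B) (real_poly_op (map_poly Im p) B)"
proof
  fix w
  have d: "degree (map_poly Re p) \<le> degree p" "degree (map_poly Im p) \<le> degree p"
    by (rule map_poly_degree_leq)+
  show "poly_op p (cext B) w = complexify (real_poly_op (map_poly Re p) B) (real_poly_op (map_poly Im p) B) w"
    unfolding poly_op_def complexify_def real_poly_op_eq_sum[OF d(1)] real_poly_op_eq_sum[OF d(2)]
    by (simp add: prod_eq_iff fst_sum snd_sum cmul_def funpow_cext coeff_map_poly sum_subtractf sum.distrib)
qed

context selfadjoint_contraction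
begin

lemma bounded_linear_cfc_complex:
  "continuous_on {-1..1} h \<Longrightarrow> bounded_linear (cfc_complex h B)"
  unfolding cfc_complex_def by (intro bounded_linear_complexify bounded_linear_cfc continuous_intros)

lemma cfc_complex_diff:
  assumes h: "continuous_on {-1..1} h" and g: "continuous_on {-1..1} g"
  shows "cfc_complex h B w - cfc_complex g B w = cfc_complex (\<lambda>t. h t - g t) B w"
proof -
  have "cfc (\<lambda>t. Re (h t) - Re (g t)) B = (\<lambda>x. cfc (\<lambda>t. Re (h t)) B x - cfc (\<lambda>t. Re (g t)) B x)"
    and "cfc (\<lambda>t. Im (h t) - Im (g t)) B = (\<lambda>x. cfc (\<lambda>t. Im (h t)) B x - cfc (\<lambda>t. Im (g t)) B x)"
    by (intro ext cfc_diff continuous_intros h g)+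
  then show ?thesis by (simp add: cfc_complex_def complexify_diff)
qed

lemma poly_op_eq_cfc_complex: "poly_op p (cext B) = cfc_complex (\<lambda>t. poly p (complex_of_real t)) B"
proof -
  have "Re (poly p (complex_of_real t)) = poly (map_poly Re p) t"
    and "Im (poly p (complex_of_real t)) = poly (map_poly Im p) t" for t
    by (induct p) (auto simp: map_poly_pCons)
  then show ?thesis by (simp add: cfc_complex_def poly_op_eq_complexify cfc_poly[abs_def])
qed

lemma norm_cfc_complex_le:
  assumes h: "continuous_on {-1..1} h" and M: "\<And>t. t \<in> {-1..1} \<Longrightarrow> cmod (h t) \<le> M"
  shows "norm (cfc_complex h B w) \<le> M * norm w"
proof -
  have M0: "0 \<le> M" using order_trans[OF norm_ge_zero M[of 0]] by simp
  have cr: "continuous_on {-1..1} (\<lambda>t. Re (h t))" and ci: "continuous_on {-1..1} (\<lambda>t. Im (h t))"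
    by (intro continuous_intros h)+
  define p where "p k = poly_approx (\<lambda>t. Re (h t)) k" for k
  define q where "q k = poly_approx (\<lambda>t. Im (h t)) k" for k
  have bound: "norm (complexify (real_poly_op (p k) B) (real_poly_op (q k) B) w) \<le> (M + 2 / (real k + 1)) * norm w" for k
  proof (rule norm_complexify_real_poly_op_le[OF selfadjoint contraction])
    show "0 \<le> M + 2 / (real k + 1)" using M0 by simp
    fix t :: real assume t: "t \<in> {-1..1}"
    define z where "z = Complex (poly (p k) t) (poly (q k) t)"
    have "cmod z \<le> cmod (h t) + (\<bar>Re (z - h t)\<bar> + \<bar>Im (z - h t)\<bar>)"
      using norm_triangle_sub[of z "h t"] cmod_le[of "z - h t"] by linarith
    also have "\<dots> \<le> M + 2 / (real k + 1)"
      using poly_approx_error[OF cr t, of k] poly_approx_error[OF ci t, of k] M[OF t] by (simp add: z_def p_def q_def)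
    finally have "cmod z ^ 2 \<le> (M + 2 / (real k + 1))^2" by (rule power_mono) simp
    then show "(poly (p k) t)^2 + (poly (q k) t)^2 \<le> (M + 2 / (real k + 1))^2" by (simp add: z_def cmod_def)
  qed
  have lim: "(\<lambda>k. complexify (real_poly_op (p k) B) (real_poly_op (q k) B) w) \<longlonglongrightarrow> cfc_complex h B w"
    unfolding cfc_complex_def complexify_def p_def q_def
    by (intro tendsto_Pair tendsto_diff tendsto_add tendsto_cfc cr ci)
  show ?thesis
  proof (rule tendsto_le[OF sequentially_bot _ tendsto_norm[OF lim]])
    show "(\<lambda>k. (M + 2 / (real k + 1)) * norm w) \<longlonglongrightarrow> M * norm w"
      using tendsto_mult[OF tendsto_add[OF tendsto_const tendsto_mult_right_zero[OF inverse_Suc_tendsto_0]] tendsto_const]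
      by simp
  qed (use bound in simp)
qed

lemma onorm_cfc_complex_le:
  assumes h: "continuous_on {-1..1} h" and M: "\<And>t. t \<in> {-1..1} \<Longrightarrow> cmod (h t) \<le> M"
  shows "onorm (cfc_complex h B) \<le> M"
  using order_trans[OF norm_ge_zero M[of 0]] by (intro onorm_bound norm_cfc_complex_le[OF h M]) auto

end

section \<open>The bounded transforms of an unbounded selfadjoint operator\<close>

lemma continuous_eq_on_dense:
  fixes f g :: "'a::topological_space \<Rightarrow> 'b::t2_space"
  assumes "closure V = UNIV" "continuous_on UNIV f" "continuous_on UNIV g" "\<And>v. v \<in> V \<Longrightarrow> f v = g v"
  shows "f x = g x"
proof -
  have "closure V \<subseteq> {x. f x = g x}"
    using closure_minimal[of V "{x. f x = g x}"] closed_Collect_eq[OF assms(2,3)] assms(4) by blast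
  then show ?thesis using assms(1) by blast
qed

lemma dense_range_bounded_selfadjoint:
  fixes S :: "'a::{real_inner,complete_space} \<Rightarrow> 'a"
  assumes "bounded_selfadjoint S" "\<And>w. S w = 0 \<Longrightarrow> w = 0"
  shows "closure (range S) = UNIV"
proof (rule dense_if_orthogonal_complement_trivial)
  have "linear S" using assms(1) bounded_linear.linear by (auto simp: bounded_selfadjoint_def)
  then show "subspace (range S)" by (rule linear_subspace_image[OF _ subspace_UNIV])
  fix z assume "\<forall>y\<in>range S. inner z y = 0"
  then have "inner (S z) (S z) = 0" using assms(1) by (simp add: bounded_selfadjoint_def)
  then show "z = 0" using assms(2) by simp
qed

locale dsa_op =
  fixes A :: "'a::{real_inner,complete_space} op"
  assumes dsa: "dsa A"
begin

abbreviation "D \<equiv> fst A"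
abbreviation "T \<equiv> snd A"

lemma dsa_unfolded:
  "subspace D \<and> closure D = UNIV \<and> (\<forall>x\<in>D. \<forall>y\<in>D. T (x + y) = T x + T y) \<and>
     (\<forall>c. \<forall>x\<in>D. T (c *\<^sub>R x) = c *\<^sub>R T x) \<and> (\<forall>x\<in>D. \<forall>y\<in>D. inner (T x) y = inner x (T y)) \<and>
     (\<forall>y z. (\<forall>x\<in>D. inner (T x) y = inner x z) \<longrightarrow> y \<in> D)"
  using dsa unfolding dsa_def Let_def .

lemma subspace_D: "subspace D"
  using dsa_unfolded by (rule conjunct1)

lemma dense_D: "closure D = UNIV"
  using dsa_unfolded[THEN conjunct2] by (rule conjunct1)

lemma T_add: "x \<in> D \<Longrightarrow> y \<in> D \<Longrightarrow> T (x + y) = T x + T y"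
  using dsa_unfolded[THEN conjunct2, THEN conjunct2, THEN conjunct1] by blast

lemma T_scale: "x \<in> D \<Longrightarrow> T (c *\<^sub>R x) = c *\<^sub>R T x"
  using dsa_unfolded[THEN conjunct2, THEN conjunct2, THEN conjunct2, THEN conjunct1] by blast

lemma T_symmetric: "x \<in> D \<Longrightarrow> y \<in> D \<Longrightarrow> inner (T x) y = inner x (T y)"
  using dsa_unfolded[THEN conjunct2, THEN conjunct2, THEN conjunct2, THEN conjunct2, THEN conjunct1] by blast

lemma adjoint_D: "(\<And>x. x \<in> D \<Longrightarrow> inner (T x) y = inner x z) \<Longrightarrow> y \<in> D"
  using dsa_unfolded[THEN conjunct2, THEN conjunct2, THEN conjunct2, THEN conjunct2, THEN conjunct2] by blast

lemma D_0: "0 \<in> D" and D_add: "x \<in> D \<Longrightarrow> y \<in> D \<Longrightarrow> x + y \<in> D"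
  and D_scale: "x \<in> D \<Longrightarrow> c *\<^sub>R x \<in> D" and D_diff: "x \<in> D \<Longrightarrow> y \<in> D \<Longrightarrow> x - y \<in> D"
  using subspace_D by (auto simp: subspace_0 subspace_add subspace_scale subspace_diff)

lemma T_0: "T 0 = 0"
  using T_scale[OF D_0, of 0] by simp

lemma T_diff: "x \<in> D \<Longrightarrow> y \<in> D \<Longrightarrow> T (x - y) = T x - T y"
  using T_add[of x "(-1) *\<^sub>R y"] T_scale[of y "-1"] D_scale[of y "-1"] by simp

lemma T_eqI:
  assumes "y \<in> D" "\<And>x. x \<in> D \<Longrightarrow> inner (T x) y = inner x z"
  shows "T y = z"
proof -
  have "inner x (T y - z) = 0" if "x \<in> D" for x
    using assms T_symmetric[OF that assms(1)] that by (simp add: inner_diff_right)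
  then show ?thesis using orthogonal_dense_eq_0[OF dense_D, of "T y - z"] by simp
qed

lemma T_closed_sequentially:
  assumes "\<And>k. x k \<in> D" "x \<longlonglongrightarrow> v" "(\<lambda>k. T (x k)) \<longlonglongrightarrow> u"
  shows "v \<in> D" "T v = u"
proof -
  have i: "inner (T y) v = inner y u" if y: "y \<in> D" for y
  proof -
    have "(\<lambda>k. inner (T y) (x k)) \<longlonglongrightarrow> inner (T y) v" "(\<lambda>k. inner y (T (x k))) \<longlonglongrightarrow> inner y u"
      by (intro tendsto_intros assms)+
    then show ?thesis using T_symmetric[OF y assms(1)] LIMSEQ_unique by simp
  qed
  then show "v \<in> D" using adjoint_D by blast
  then show "T v = u" using T_eqI i by blast
qed

definition graph :: "('a \<times> 'a) set" where "graph = {(x, T x) | x. x \<in> D}"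

lemma subspace_graph: "subspace graph"
  unfolding subspace_def graph_def
proof (intro conjI ballI allI)
  show "0 \<in> {(x, T x) |x. x \<in> D}" using D_0 T_0 by (auto simp: zero_prod_def)
next
  fix a b assume "a \<in> {(x, T x) |x. x \<in> D}" "b \<in> {(x, T x) |x. x \<in> D}"
  then obtain x y where "a = (x, T x)" "b = (y, T y)" "x \<in> D" "y \<in> D" by blast
  then show "a + b \<in> {(x, T x) |x. x \<in> D}" using T_add D_add by (auto intro!: exI[of _ "x + y"])
next
  fix c :: real and a assume "a \<in> {(x, T x) |x. x \<in> D}"
  then obtain x where "a = (x, T x)" "x \<in> D" by blast
  then show "c *\<^sub>R a \<in> {(x, T x) |x. x \<in> D}" using T_scale D_scale by (auto intro!: exI[of _ "c *\<^sub>R x"])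
qed

lemma closed_graph: "closed graph"
proof (rule closed_sequential_limits[THEN iffD2], intro allI impI)
  fix s l assume a: "(\<forall>n. s n \<in> graph) \<and> s \<longlonglongrightarrow> l"
  then have "\<forall>n. \<exists>x. x \<in> D \<and> s n = (x, T x)" unfolding graph_def by blast
  then obtain x where x: "\<And>n. x n \<in> D" "\<And>n. s n = (x n, T (x n))" by metis
  have "(\<lambda>n. fst (s n)) \<longlonglongrightarrow> fst l" "(\<lambda>n. snd (s n)) \<longlonglongrightarrow> snd l"
    using a by (auto intro: tendsto_fst tendsto_snd)
  then have "fst l \<in> D" "T (fst l) = snd l" using T_closed_sequentially[OF x(1)] x(2) by simp_all
  then show "l \<in> graph" unfolding graph_def by (intro CollectI exI[of _ "fst l"]) (auto simp: prod_eq_iff)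
qed


lemma exists_one_plus_sq_solution: "\<exists>x. x \<in> D \<and> T x \<in> D \<and> x + T (T x) = w"
proof -
  \<comment> \<open>Project \<open>(w, 0)\<close> onto the closed graph of \<open>T\<close>.\<close>
  obtain m where m: "m \<in> graph" "\<And>y. y \<in> graph \<Longrightarrow> inner ((w, 0) - m) y = 0"
    using exists_orthogonal_projection[OF subspace_graph closed_graph] by blast
  then obtain x where x: "x \<in> D" "m = (x, T x)" unfolding graph_def by blast
  have orth: "inner (T y) (T x) = inner y (w - x)" if "y \<in> D" for y
    using m(2)[of "(y, T y)"] that x(2) unfolding graph_def
    by (auto simp: inner_Pair inner_commute algebra_simps)
  then have "T x \<in> D" using adjoint_D by blast
  moreover have "T (T x) = w - x" using T_eqI[OF \<open>T x \<in> D\<close>] orth by simp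
  ultimately show ?thesis using x(1) by (intro exI[of _ x]) simp
qed

lemma one_plus_sq_solution_unique:
  assumes "x \<in> D" "T x \<in> D" "x + T (T x) = w" "y \<in> D" "T y \<in> D" "y + T (T y) = w"
  shows "x = y"
proof -
  define d where "d = x - y"
  have d: "d \<in> D" "T d \<in> D" "T d = T x - T y" using assms by (simp_all add: d_def D_diff T_diff)
  then have "d + T (T d) = 0" using assms by (simp add: T_diff d_def algebra_simps)
  then have "inner (d + T (T d)) d = 0" by simp
  then have "inner d d + inner (T d) (T d) = 0"
    using T_symmetric[OF d(2) d(1)] by (simp add: inner_add_left)
  then have "inner d d = 0" by (smt (verit) inner_ge_zero)
  then show ?thesis by (simp add: d_def)
qed

definition R :: "'a \<Rightarrow> 'a" where "R = one_plus_sq_inv A"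

lemma R_solves: "R w \<in> D" "T (R w) \<in> D" "R w + T (T (R w)) = w"
proof -
  have "\<exists>!x. x \<in> D \<and> T x \<in> D \<and> x + T (T x) = w"
    using exists_one_plus_sq_solution one_plus_sq_solution_unique by blast
  then have "R w \<in> D \<and> T (R w) \<in> D \<and> R w + T (T (R w)) = w"
    unfolding R_def one_plus_sq_inv_def by (rule theI')
  then show "R w \<in> D" "T (R w) \<in> D" "R w + T (T (R w)) = w" by auto
qed

lemma R_eqI: "x \<in> D \<Longrightarrow> T x \<in> D \<Longrightarrow> x + T (T x) = w \<Longrightarrow> R w = x"
  using one_plus_sq_solution_unique R_solves by blast

lemma T_T_R: "T (T (R w)) = w - R w"
  using R_solves(3)[of w] by (simp add: algebra_simps)

definition K :: "'a \<Rightarrow> 'a" where "K w = T (R w)"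

lemma K_in_D: "K w \<in> D"
  using R_solves by (simp add: K_def)

lemma R_add: "R (u + v) = R u + R v"
proof (rule R_eqI)
  have "T (R u + R v) = T (R u) + T (R v)" using T_add R_solves by blast
  then show "R u + R v \<in> D" "T (R u + R v) \<in> D" "R u + R v + T (T (R u + R v)) = u + v"
    using R_solves D_add T_add by (simp_all add: T_T_R)
qed

lemma R_scale: "R (c *\<^sub>R u) = c *\<^sub>R R u"
proof (rule R_eqI)
  have "T (c *\<^sub>R R u) = c *\<^sub>R T (R u)" using T_scale R_solves by blast
  then show "c *\<^sub>R R u \<in> D" "T (c *\<^sub>R R u) \<in> D" "c *\<^sub>R R u + T (T (c *\<^sub>R R u)) = c *\<^sub>R u"
    using R_solves D_scale T_scale by (simp_all add: T_T_R algebra_simps)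
qed

lemma inner_R: "inner (R u) v = inner (R u) (R v) + inner (K u) (K v)"
proof -
  have "inner (R u) v = inner (R u) (R v + T (T (R v)))" using R_solves(3)[of v] by simp
  also have "\<dots> = inner (R u) (R v) + inner (T (R u)) (T (R v))"
    using T_symmetric[OF R_solves(1) R_solves(2)] by (simp add: inner_add_right)
  finally show ?thesis by (simp add: K_def)
qed

lemma R_symmetric: "inner (R u) v = inner u (R v)"
  using inner_R[of u v] inner_R[of v u] by (simp add: inner_commute)

lemma norm_R_K: "norm (R u)^2 + norm (K u)^2 = inner (R u) u"
  using inner_R[of u u] by (simp add: power2_norm_eq_inner)

lemma norm_R_le: "norm (R u) \<le> norm u"
proof -
  have "norm (R u)^2 \<le> norm (R u) * norm u"
    using norm_R_K[of u] norm_cauchy_schwarz[of "R u" u] zero_le_power2[of "norm (K u)"] by linarith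
  then show ?thesis by (cases "R u = 0") (auto simp: power2_eq_square)
qed

lemma norm_K_le: "norm (K u) \<le> norm u"
proof -
  have "norm (K u)^2 \<le> norm (R u) * norm u"
    using norm_R_K[of u] norm_cauchy_schwarz[of "R u" u] zero_le_power2[of "norm (R u)"] by linarith
  also have "\<dots> \<le> norm u ^ 2" using norm_R_le[of u] by (simp add: power2_eq_square mult_right_mono)
  finally show ?thesis by (simp add: power2_le_iff_abs_le)
qed

lemma bounded_linear_R: "bounded_linear R"
  by (rule bounded_linear_intro[of _ 1]) (auto simp: R_add R_scale norm_R_le)

lemma positive_op_R: "positive_op R"
  using bounded_linear_R R_symmetric norm_R_K[symmetric]
  by (simp add: positive_op_def bounded_selfadjoint_def add_nonneg_nonneg)

lemma R_eq_0: "R w = 0 \<Longrightarrow> w = 0"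
  using R_solves(3)[of w] T_0 by simp

lemma bounded_linear_K: "bounded_linear K"
  by (rule bounded_linear_intro[of _ 1]) (auto simp: K_def R_add R_scale T_add T_scale R_solves norm_K_le[unfolded K_def])

lemma R_K_commute: "R (K w) = K (R w)"
proof (rule R_eqI)
  show "K (R w) \<in> D" by (rule K_in_D)
  have "T (K (R w)) = R w - R (R w)" by (simp add: K_def T_T_R)
  then show "T (K (R w)) \<in> D" "K (R w) + T (T (K (R w))) = K w"
    using R_solves D_diff T_diff by (simp_all add: K_def)
qed

lemma K_symmetric: "inner (K u) v = inner u (K v)"
proof -
  have "inner (K u) v = inner (T (R u)) (R v + T (T (R v)))" using R_solves(3)[of v] by (simp add: K_def)
  also have "\<dots> = inner (R u) (T (R v)) + inner (T (T (R u))) (T (R v))"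
    using T_symmetric[OF R_solves(1)[of u] R_solves(1)[of v]] T_symmetric[OF R_solves(2)[of u] R_solves(2)[of v]]
    by (simp add: inner_add_right)
  also have "\<dots> = inner u (K v)" using R_solves(3)[of u] by (simp add: K_def flip: inner_add_left)
  finally show ?thesis .
qed

lemma K_K: "K (K w) = R w - R (R w)"
  using R_K_commute[of w] by (simp add: K_def T_T_R)

text \<open>\<open>R = (1 + X) / 2\<close> for a selfadjoint contraction \<open>X\<close>, so the square root of \<open>R\<close> is
  obtained from the functional calculus of \<open>X\<close>.\<close>

definition X :: "'a \<Rightarrow> 'a" where "X w = 2 *\<^sub>R R w - w"

lemma selfadjoint_contraction_X: "selfadjoint_contraction X"
proof
  have "bounded_linear X"
    unfolding X_def[abs_def]
    by (intro bounded_linear_sub bounded_linear_compose[OF bounded_linear_scaleR_right bounded_linear_R]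
        bounded_linear_ident)
  then show "bounded_selfadjoint X"
    using R_symmetric by (simp add: bounded_selfadjoint_def X_def inner_diff_left inner_diff_right inner_commute)
  fix x
  have "norm (X x)^2 = 4 * norm (R x)^2 - 4 * inner (R x) x + norm x ^2"
    unfolding X_def power2_norm_eq_inner by (simp add: inner_diff inner_commute algebra_simps)
  also have "\<dots> \<le> norm x ^2" using norm_R_K[of x] zero_le_power2[of "norm (K x)"] by linarith
  finally show "norm (X x) \<le> norm x" by (simp add: power2_le_iff_abs_le)
qed

interpretation X: selfadjoint_contraction X by (rule selfadjoint_contraction_X)

definition sqrt_R :: "'a \<Rightarrow> 'a" where "sqrt_R = cfc (\<lambda>t. sqrt ((1 + t) / 2)) X"

lemma sqrt_R_continuous: "continuous_on {-1..1} (\<lambda>t::real. sqrt ((1 + t) / 2))"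
  by (intro continuous_intros) auto

lemma positive_op_sqrt_R: "positive_op sqrt_R"
  unfolding sqrt_R_def by (rule X.positive_op_cfc[OF sqrt_R_continuous]) simp

lemma sqrt_R_sqrt_R: "sqrt_R (sqrt_R w) = R w"
proof -
  have "sqrt_R (sqrt_R w) = cfc (\<lambda>t. sqrt ((1 + t) / 2) * sqrt ((1 + t) / 2)) X w"
    unfolding sqrt_R_def by (rule X.cfc_mult[symmetric, OF sqrt_R_continuous sqrt_R_continuous])
  also have "\<dots> = cfc (poly [:1/2, 1/2:]) X w"
    by (rule X.cfc_cong)
      (use continuous_on_poly[OF continuous_on_id[of "{-1..1::real}"], of "[:1/2, 1/2::real:]"] in auto)
  also have "\<dots> = R w"
    using R_scale[of 0 0] by (simp add: X.cfc_poly real_poly_op_pCons[OF X.linear_B] X_def R_scale R_add)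
  finally show ?thesis .
qed

lemma sqrt_R_commute:
  assumes "bounded_linear C" "\<And>x. R (C x) = C (R x)"
  shows "sqrt_R (C x) = C (sqrt_R x)"
  unfolding sqrt_R_def
proof (rule X.cfc_commute[OF sqrt_R_continuous assms(1)])
  show "X (C x) = C (X x)" for x
    using assms linear_diff[OF bounded_linear.linear[OF assms(1)]]
      linear_scale[OF bounded_linear.linear[OF assms(1)]]
    by (simp add: X_def)
qed

\<comment> \<open>Any positive square root of \<open>R\<close> commutes with \<open>R\<close>, hence with \<open>sqrt_R\<close>; then
  \<open>(U - sqrt_R) U (U - sqrt_R) + (U - sqrt_R) sqrt_R (U - sqrt_R) = 0\<close> forces \<open>U = sqrt_R\<close>.\<close>
lemma positive_sqrt_R_unique:
  assumes U: "positive_op U" and UU: "\<And>w. U (U w) = R w"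
  shows "U = sqrt_R"
proof -
  have blU: "bounded_linear U" and symU: "\<And>x y. inner (U x) y = inner x (U y)"
    using U by (auto simp: positive_op_def bounded_selfadjoint_def)
  have blV: "bounded_linear sqrt_R" and symV: "\<And>x y. inner (sqrt_R x) y = inner x (sqrt_R y)"
    using positive_op_sqrt_R by (auto simp: positive_op_def bounded_selfadjoint_def)
  have comm: "sqrt_R (U x) = U (sqrt_R x)" for x
    by (rule sqrt_R_commute[OF blU]) (metis UU)
  define d where "d x = U x - sqrt_R x" for x
  have "U (d x) + sqrt_R (d x) = 0" for x
    using UU sqrt_R_sqrt_R comm
    by (simp add: d_def linear_diff[OF bounded_linear.linear[OF blU]] linear_diff[OF bounded_linear.linear[OF blV]])
  then have "inner (U (d x)) (d x) + inner (sqrt_R (d x)) (d x) = 0" for x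
    by (metis inner_add_left inner_zero_left)
  then have "U (d x) = 0 \<and> sqrt_R (d x) = 0" for x
    using U positive_op_sqrt_R positive_op_form_eq_0
    by (metis add_nonneg_eq_0_iff positive_op_def)
  then have "inner (d x) (d x) = 0" for x
    using symU symV by (simp add: d_def inner_diff_left)
  then show ?thesis by (auto simp: d_def fun_eq_iff)
qed

definition S :: "'a \<Rightarrow> 'a" where "S = inv_sqrt_one_plus_sq A"

lemma S_eq_sqrt_R: "S = sqrt_R"
  unfolding S_def inv_sqrt_one_plus_sq_def
proof (rule the_equality)
  show "bounded_linear sqrt_R \<and> (\<forall>x y. inner (sqrt_R x) y = inner x (sqrt_R y)) \<and>
      (\<forall>x. 0 \<le> inner (sqrt_R x) x) \<and> sqrt_R \<circ> sqrt_R = one_plus_sq_inv A"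
    using positive_op_sqrt_R sqrt_R_sqrt_R by (auto simp: positive_op_def bounded_selfadjoint_def R_def)
next
  fix U assume "bounded_linear U \<and> (\<forall>x y. inner (U x) y = inner x (U y)) \<and>
      (\<forall>x. 0 \<le> inner (U x) x) \<and> U \<circ> U = one_plus_sq_inv A"
  then show "U = sqrt_R"
    by (intro positive_sqrt_R_unique) (auto simp: positive_op_def bounded_selfadjoint_def R_def fun_eq_iff)
qed

end

context dsa_op
begin

lemma positive_op_S: "positive_op S"
  using positive_op_sqrt_R by (simp add: S_eq_sqrt_R)

lemma bounded_selfadjoint_S: "bounded_selfadjoint S"
  using positive_op_S by (simp add: positive_op_def)

lemma bounded_linear_S: "bounded_linear S"
  using bounded_selfadjoint_S by (simp add: bounded_selfadjoint_def)

lemma S_S: "S (S w) = R w"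
  by (simp add: S_eq_sqrt_R sqrt_R_sqrt_R)

lemma S_commute: "bounded_linear C \<Longrightarrow> (\<And>x. R (C x) = C (R x)) \<Longrightarrow> S (C x) = C (S x)"
  using sqrt_R_commute by (simp add: S_eq_sqrt_R)

lemma S_K_commute: "S (K x) = K (S x)"
  by (rule S_commute[OF bounded_linear_K]) (simp add: R_K_commute)

lemma dense_range_S: "closure (range S) = UNIV"
proof (rule dense_range_bounded_selfadjoint[OF bounded_selfadjoint_S])
  fix w assume "S w = 0"
  then have "R w = 0" using S_S[of w] linear_0[OF bounded_linear.linear[OF bounded_linear_S]] by simp
  then show "w = 0" by (rule R_eq_0)
qed

lemma dense_range_R: "closure (range R) = UNIV"
  using dense_range_bounded_selfadjoint[OF _ R_eq_0] positive_op_R by (simp add: positive_op_def)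

lemma norm_K_le_norm_S: "norm (K u) \<le> norm (S u)"
proof -
  have "norm (K u)^2 = inner (R u) u - inner (R u) (R u)"
    using K_symmetric[of "K u" u] R_symmetric[of "R u" u] by (simp add: power2_norm_eq_inner K_K inner_diff_left)
  also have "inner (R u) u = norm (S u)^2"
    using bounded_selfadjoint_S by (simp add: power2_norm_eq_inner bounded_selfadjoint_def flip: S_S)
  finally have "norm (K u)^2 \<le> norm (S u)^2" by simp
  then show ?thesis by (simp add: power2_le_iff_abs_le)
qed

\<comment> \<open>\<open>T S\<close> is the closure of \<open>K S\<^sup>-\<^sup>1\<close>, defined on the dense range of \<open>S\<close>; it is a contraction
  because \<open>K\<close> is dominated by \<open>S\<close>, and the graph of \<open>T\<close> is closed.\<close>
lemma S_in_D: "S v \<in> D" and norm_T_S_le: "norm (T (S v)) \<le> norm v"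
proof -
  have "v \<in> closure (range S)" using dense_range_S by simp
  then obtain a where a: "\<And>n. a n \<in> range S" "a \<longlonglongrightarrow> v" unfolding closure_sequential by metis
  then have "\<forall>n. \<exists>x. a n = S x" by (auto simp: image_iff)
  then obtain w where w: "\<And>n. a n = S (w n)" using choice[of "\<lambda>n x. a n = S x"] by blast
  have Sw: "(\<lambda>n. S (w n)) \<longlonglongrightarrow> v" using a(2) unfolding w .
  have lin_S: "linear S" and lin_K: "linear K"
    using bounded_linear_S bounded_linear_K bounded_linear.linear by blast+
  have "Cauchy (\<lambda>n. K (w n))"
  proof (rule metric_CauchyI)
    fix e :: real assume "e > 0"
    then obtain N where N: "\<And>m n. m \<ge> N \<Longrightarrow> n \<ge> N \<Longrightarrow> dist (S (w m)) (S (w n)) < e"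
      using LIMSEQ_imp_Cauchy[OF Sw] metric_CauchyD by blast
    have "dist (K (w m)) (K (w n)) \<le> dist (S (w m)) (S (w n))" for m n
      using norm_K_le_norm_S[of "w m - w n"] by (simp add: dist_norm linear_diff[OF lin_K] linear_diff[OF lin_S])
    then have "dist (K (w m)) (K (w n)) < e" if "m \<ge> N" "n \<ge> N" for m n
      using N[OF that] by (rule order.strict_trans1)
    then show "\<exists>N. \<forall>m\<ge>N. \<forall>n\<ge>N. dist (K (w m)) (K (w n)) < e" by blast
  qed
  then obtain u where "(\<lambda>n. K (w n)) \<longlonglongrightarrow> u" using Cauchy_convergent_iff convergent_def by blast
  then have u: "(\<lambda>n. T (R (w n))) \<longlonglongrightarrow> u" by (simp add: K_def)
  have "(\<lambda>n. R (w n)) \<longlonglongrightarrow> S v"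
    using bounded_linear.tendsto[OF bounded_linear_S Sw] by (simp add: S_S)
  note c = T_closed_sequentially[of "\<lambda>n. R (w n)", OF R_solves(1) this u]
  then show "S v \<in> D" by simp
  have "norm u \<le> norm v"
  proof (rule tendsto_le[OF sequentially_bot])
    show "(\<lambda>n. norm (T (R (w n)))) \<longlonglongrightarrow> norm u" "(\<lambda>n. norm (S (w n))) \<longlonglongrightarrow> norm v"
      by (intro tendsto_intros u Sw)+
  qed (use norm_K_le_norm_S in \<open>simp add: K_def\<close>)
  then show "norm (T (S v)) \<le> norm v" using c by simp
qed

abbreviation Psi :: "'a \<Rightarrow> 'a" where "Psi \<equiv> riesz A"

lemma Psi_eq: "Psi v = T (S v)"
  by (simp add: riesz_def S_def)

lemma bounded_linear_Psi: "bounded_linear Psi"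
proof (rule bounded_linear_intro[of _ 1])
  have lin_S: "linear S" using bounded_linear_S bounded_linear.linear by blast
  show "Psi (u + v) = Psi u + Psi v" "Psi (c *\<^sub>R v) = c *\<^sub>R Psi v" for u v c
    using T_add T_scale S_in_D by (simp_all add: Psi_eq linear_add[OF lin_S] linear_scale[OF lin_S])
  show "norm (Psi v) \<le> norm v * 1" for v using norm_T_S_le by (simp add: Psi_eq)
qed

lemma Psi_S: "Psi (S w) = K w"
  by (simp add: Psi_eq S_S K_def)

lemma S_Psi: "S (Psi v) = K v"
proof (rule continuous_eq_on_dense[OF dense_range_S, of "\<lambda>v. S (Psi v)" K])
  show "continuous_on UNIV (\<lambda>v. S (Psi v))" "continuous_on UNIV K"
    by (intro linear_continuous_on bounded_linear_compose[OF bounded_linear_S bounded_linear_Psi]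
        bounded_linear_K)+
  fix v assume "v \<in> range S"
  then show "S (Psi v) = K v" by (auto simp: Psi_S S_K_commute)
qed

lemma Psi_symmetric: "inner (Psi x) y = inner x (Psi y)"
proof (rule continuous_eq_on_dense[OF dense_range_S, of "\<lambda>y. inner (Psi x) y" "\<lambda>y. inner x (Psi y)"])
  show "continuous_on UNIV (\<lambda>y. inner (Psi x) y)" "continuous_on UNIV (\<lambda>y. inner x (Psi y))"
    by (intro continuous_intros linear_continuous_on[OF bounded_linear_Psi])+
  fix v assume "v \<in> range S"
  then obtain w where v: "v = S w" by blast
  have "inner (Psi x) (S w) = inner (S (Psi x)) w"
    using bounded_selfadjoint_S by (simp add: bounded_selfadjoint_def)
  then show "inner (Psi x) v = inner x (Psi v)" by (simp add: v S_Psi K_symmetric Psi_S)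
qed

lemma selfadjoint_contraction_Psi: "selfadjoint_contraction Psi"
  using bounded_linear_Psi Psi_symmetric norm_T_S_le
  by unfold_locales (simp_all add: bounded_selfadjoint_def Psi_eq)

lemma Psi_Psi: "Psi (Psi v) = v - R v"
proof (rule continuous_eq_on_dense[OF dense_range_R, of "\<lambda>v. Psi (Psi v)" "\<lambda>v. v - R v"])
  show "continuous_on UNIV (\<lambda>v. Psi (Psi v))" "continuous_on UNIV (\<lambda>v. v - R v)"
    by (intro linear_continuous_on bounded_linear_compose[OF bounded_linear_Psi bounded_linear_Psi]
        bounded_linear_sub bounded_linear_ident bounded_linear_R)+
  fix v assume "v \<in> range R"
  then obtain w where v: "v = R w" by blast
  have "Psi (Psi (S (S w))) = K (K w)" by (simp add: Psi_S flip: S_K_commute)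
  then show "Psi (Psi v) = v - R v" by (simp add: v S_S K_K)
qed

end

section \<open>The functional calculus of \<open>A\<close> through its Riesz transform\<close>

lemma psi_bounds: "-1 < psi l" "psi l < 1"
proof -
  have "\<bar>l\<bar> < sqrt (1 + l^2)" using real_sqrt_less_mono[of "l^2" "1 + l^2"] by simp
  moreover have "sqrt (1 + l^2) > 0" by (simp add: add_pos_nonneg)
  ultimately have "\<bar>psi l\<bar> < 1" by (simp add: psi_def abs_divide divide_less_eq)
  then show "-1 < psi l" "psi l < 1" by auto
qed

lemma psi_tendsto_at_top: "(psi \<longlongrightarrow> 1) at_top"
  unfolding psi_def[abs_def] by real_asymp

lemma psi_tendsto_at_bot: "(psi \<longlongrightarrow> -1) at_bot"
  unfolding psi_def[abs_def] by real_asymp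

definition psi_inv :: "real \<Rightarrow> real" where "psi_inv t = t / sqrt (1 - t^2)"

lemma psi_inv_psi: "psi_inv (psi l) = l"
proof -
  have p: "sqrt (1 + l^2) > 0" by (simp add: add_pos_nonneg)
  have "1 - (psi l)^2 = 1 / (1 + l^2)"
    using p by (simp add: psi_def power_divide field_simps add_nonneg_nonneg)
  then show ?thesis using p by (simp add: psi_inv_def psi_def real_sqrt_divide)
qed

lemma psi_psi_inv: "-1 < t \<Longrightarrow> t < 1 \<Longrightarrow> psi (psi_inv t) = t"
proof -
  assume t: "-1 < t" "t < 1"
  then have q: "1 - t^2 > 0" using abs_square_less_1[of t] by (simp add: abs_less_iff)
  have "1 + (psi_inv t)^2 = 1 / (1 - t^2)"
    using q by (simp add: psi_inv_def power_divide field_simps)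
  then show ?thesis using q by (simp add: psi_inv_def psi_def real_sqrt_divide)
qed

lemma psi_inv_tendsto_at_left_1: "filterlim psi_inv at_top (at_left 1)"
  unfolding psi_inv_def[abs_def] by real_asymp

lemma psi_inv_tendsto_at_right_minus_1: "filterlim psi_inv at_bot (at_right (-1))"
  unfolding psi_inv_def[abs_def] by real_asymp

lemma continuous_on_psi_inv: "continuous_on {-1<..<1} psi_inv"
  unfolding psi_inv_def
  by (intro continuous_intros) (auto simp: power2_eq_1_iff)

text \<open>The function \<open>g\<close> on [-1, 1] with \<open>g (psi l) = f l\<close>, extended to the endpoints by the limits
  of \<open>f\<close> at \<open>\<plusminus>\<infinity>\<close>: thus \<open>f(A) = g(Psi(A))\<close>.\<close>

definition psi_transfer :: "(real \<Rightarrow> complex) \<Rightarrow> real \<Rightarrow> complex" where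
  "psi_transfer f t =
     (if 1 \<le> t then Lim at_top f else if t \<le> -1 then Lim at_bot f else f (psi_inv t))"

lemma psi_transfer_psi: "psi_transfer f (psi l) = f l"
  using psi_bounds[of l] by (simp add: psi_transfer_def psi_inv_psi)

lemma psi_transfer_1: "(f \<longlongrightarrow> L) at_top \<Longrightarrow> psi_transfer f 1 = L"
  by (simp add: psi_transfer_def tendsto_Lim)

lemma psi_transfer_minus_1: "(f \<longlongrightarrow> L) at_bot \<Longrightarrow> psi_transfer f (-1) = L"
  by (simp add: psi_transfer_def tendsto_Lim)

lemma tendsto_psi_transfer_at_left_1:
  assumes "(f \<longlongrightarrow> L) at_top"
  shows "(psi_transfer f \<longlongrightarrow> L) (at_left 1)"
proof (rule Lim_transform_eventually)
  show "((\<lambda>t. f (psi_inv t)) \<longlongrightarrow> L) (at_left 1)"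
    by (rule filterlim_compose[OF assms psi_inv_tendsto_at_left_1])
  have "\<forall>\<^sub>F s in at_left (1::real). s \<in> {-1<..<1}" by (rule eventually_at_left_real) simp
  then show "\<forall>\<^sub>F s in at_left 1. f (psi_inv s) = psi_transfer f s"
    by eventually_elim (simp add: psi_transfer_def)
qed

lemma tendsto_psi_transfer_at_right_minus_1:
  assumes "(f \<longlongrightarrow> L) at_bot"
  shows "(psi_transfer f \<longlongrightarrow> L) (at_right (-1))"
proof (rule Lim_transform_eventually)
  show "((\<lambda>t. f (psi_inv t)) \<longlongrightarrow> L) (at_right (-1))"
    by (rule filterlim_compose[OF assms psi_inv_tendsto_at_right_minus_1])
  have "\<forall>\<^sub>F s in at_right (-1::real). s \<in> {-1<..<1}" by (rule eventually_at_right_real) simp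
  then show "\<forall>\<^sub>F s in at_right (-1). f (psi_inv s) = psi_transfer f s"
    by eventually_elim (simp add: psi_transfer_def)
qed

lemma continuous_on_psi_transfer:
  assumes f: "f \<in> algA"
  shows "continuous_on {-1..1} (psi_transfer f)"
  unfolding continuous_on_def
proof
  obtain Lt Lb where Lt: "(f \<longlongrightarrow> Lt) at_top" and Lb: "(f \<longlongrightarrow> Lb) at_bot"
    using f by (auto simp: algA_def)
  have inner: "continuous_on {-1<..<1} (psi_transfer f)"
  proof (rule continuous_on_cong[THEN iffD1])
    show "continuous_on {-1<..<1} (\<lambda>t. f (psi_inv t))"
      using f by (intro continuous_on_compose2[OF _ continuous_on_psi_inv]) (auto simp: algA_def)
  qed (auto simp: psi_transfer_def)
  fix t :: real assume "t \<in> {-1..1}"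
  then consider "t = 1" | "t = -1" | "t \<in> {-1<..<1}" by fastforce
  then show "(psi_transfer f \<longlongrightarrow> psi_transfer f t) (at t within {-1..1})"
  proof cases
    case 1
    then show ?thesis
      using tendsto_psi_transfer_at_left_1[OF Lt] psi_transfer_1[OF Lt] at_within_Icc_at_left[of "-1" "1::real"]
      by simp
  next
    case 2
    then show ?thesis
      using tendsto_psi_transfer_at_right_minus_1[OF Lb] psi_transfer_minus_1[OF Lb]
        at_within_Icc_at_right[of "-1" "1::real"]
      by simp
  next
    case 3
    then have "(psi_transfer f \<longlongrightarrow> psi_transfer f t) (at t within {-1<..<1})"
      using inner continuous_on_def by blast
    then have "(psi_transfer f \<longlongrightarrow> psi_transfer f t) (at t)"
      using 3 at_within_open[of t "{-1<..<1}"] by simp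
    then show ?thesis by (rule tendsto_within_subset) simp
  qed
qed

lemma norm_poly_psi_transfer_le:
  assumes f: "f \<in> algA" and q: "\<And>l. cmod (poly q (complex_of_real (psi l)) - f l) \<le> e"
    and t: "t \<in> {-1..1}"
  shows "cmod (poly q (complex_of_real t) - psi_transfer f t) \<le> e"
proof -
  obtain Lt Lb where Lt: "(f \<longlongrightarrow> Lt) at_top" and Lb: "(f \<longlongrightarrow> Lb) at_bot"
    using f by (auto simp: algA_def)
  have pc: "isCont (\<lambda>s. poly q (complex_of_real s)) s" for s by (intro continuous_intros)
  consider "t = 1" | "t = -1" | "-1 < t" "t < 1" using t by fastforce
  then show ?thesis
  proof cases
    case 1
    have "((\<lambda>l. cmod (poly q (complex_of_real (psi l)) - f l)) \<longlongrightarrow> cmod (poly q 1 - Lt)) at_top"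
      using tendsto_norm[OF tendsto_diff[OF isCont_tendsto_compose[OF pc psi_tendsto_at_top] Lt]] by simp
    then have "cmod (poly q 1 - Lt) \<le> e"
      by (rule tendsto_upperbound) (simp_all add: q trivial_limit_at_top_linorder)
    then show ?thesis using 1 psi_transfer_1[OF Lt] by simp
  next
    case 2
    have "((\<lambda>l. cmod (poly q (complex_of_real (psi l)) - f l)) \<longlongrightarrow> cmod (poly q (-1) - Lb)) at_bot"
      using tendsto_norm[OF tendsto_diff[OF isCont_tendsto_compose[OF pc psi_tendsto_at_bot] Lb]] by simp
    then have "cmod (poly q (-1) - Lb) \<le> e"
      by (rule tendsto_upperbound) (simp_all add: q trivial_limit_at_bot_linorder)
    then show ?thesis using 2 psi_transfer_minus_1[OF Lb] by simp
  next
    case 3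
    then show ?thesis using q[of "psi_inv t"] psi_transfer_psi[of f "psi_inv t"] psi_psi_inv by simp
  qed
qed

text \<open>\<open>inv_i_plus (psi l) = (\<i> + l)\<^sup>-\<^sup>1\<close> and \<open>inv_i_minus (psi l) = (\<i> - l)\<^sup>-\<^sup>1\<close>.\<close>

definition inv_i_plus :: "real \<Rightarrow> complex" where
  "inv_i_plus t = complex_of_real (t * sqrt (1 - t^2)) - \<i> * complex_of_real (1 - t^2)"

definition inv_i_minus :: "real \<Rightarrow> complex" where
  "inv_i_minus t = - complex_of_real (t * sqrt (1 - t^2)) - \<i> * complex_of_real (1 - t^2)"

lemma continuous_on_inv_i_plus: "continuous_on S inv_i_plus"
  and continuous_on_inv_i_minus: "continuous_on S inv_i_minus"
  unfolding inv_i_plus_def inv_i_minus_def by (intro continuous_intros)+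

lemma square_le_1_Icc: "t \<in> {-1..1} \<Longrightarrow> t^2 \<le> (1::real)"
  using abs_square_le_1[of t] by (simp add: abs_le_iff)

lemma inv_i_plus_eq_imp_endpoints:
  fixes x y :: real
  assumes "x \<in> {-1..1}" "y \<in> {-1..1}" "x \<noteq> y" "inv_i_plus x = inv_i_plus y"
  shows "{x, y} = {-1, 1}"
proof -
  have "x^2 = y^2" using assms(4) by (simp add: inv_i_plus_def complex_eq_iff)
  then have y: "y = - x" using assms(3) by (simp add: power2_eq_iff)
  then have "x * sqrt (1 - x^2) = 0" using assms(4) by (simp add: inv_i_plus_def complex_eq_iff)
  moreover have "x \<noteq> 0" using assms(3) y by simp
  ultimately have "sqrt (1 - x^2) = 0" by simp
  then have "x^2 = 1" using square_le_1_Icc[OF assms(1)] by simp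
  then show ?thesis using y by (auto simp: power2_eq_1_iff)
qed

context dsa_op
begin

interpretation Psi: selfadjoint_contraction Psi by (rule selfadjoint_contraction_Psi)

lemma real_poly_op_1_minus_sq_Psi: "real_poly_op [:1, 0, -1:] Psi w = R w"
  by (simp add: real_poly_op_pCons[OF Psi.linear_B] linear_neg[OF Psi.linear_B] linear_0[OF Psi.linear_B] Psi_Psi)

lemma S_eq_cfc: "S = cfc (\<lambda>t. sqrt (1 - t^2)) Psi"
proof -
  have c: "continuous_on {-1..1} (\<lambda>t::real. sqrt (1 - t^2))" by (intro continuous_intros)
  have "cfc (\<lambda>t. sqrt (1 - t^2)) Psi = sqrt_R"
  proof (rule positive_sqrt_R_unique)
    show "positive_op (cfc (\<lambda>t. sqrt (1 - t^2)) Psi)"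
      by (rule Psi.positive_op_cfc[OF c]) (simp add: square_le_1_Icc)
    fix w
    have "cfc (\<lambda>t. sqrt (1 - t^2)) Psi (cfc (\<lambda>t. sqrt (1 - t^2)) Psi w)
        = cfc (\<lambda>t. sqrt (1 - t^2) * sqrt (1 - t^2)) Psi w"
      by (rule Psi.cfc_mult[symmetric, OF c c])
    also have "\<dots> = cfc (poly [:1, 0, -1:]) Psi w"
    proof (rule Psi.cfc_cong)
      show "continuous_on {-1..1} (poly [:1, 0, -1::real:])"
        using continuous_on_poly[OF continuous_on_id[of "{-1..1::real}"], of "[:1, 0, -1::real:]"] by simp
      fix t :: real assume "t \<in> {-1..1}"
      then have "t^2 \<le> 1" by (rule square_le_1_Icc)
      then show "sqrt (1 - t^2) * sqrt (1 - t^2) = poly [:1, 0, -1:] t" by (simp add: power2_eq_square)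
    qed
    finally show "cfc (\<lambda>t. sqrt (1 - t^2)) Psi (cfc (\<lambda>t. sqrt (1 - t^2)) Psi w) = R w"
      by (simp add: Psi.cfc_poly real_poly_op_1_minus_sq_Psi)
  qed
  then show ?thesis by (simp add: S_eq_sqrt_R)
qed

lemma K_eq_cfc: "K w = cfc (\<lambda>t. t * sqrt (1 - t^2)) Psi w"
proof -
  have "cfc (\<lambda>t. sqrt (1 - t^2) * t) Psi w = cfc (\<lambda>t. sqrt (1 - t^2)) Psi (cfc (\<lambda>t. t) Psi w)"
    by (rule Psi.cfc_mult) (intro continuous_intros)+
  then show ?thesis by (simp add: Psi.cfc_ident S_Psi mult.commute flip: S_eq_cfc)
qed

lemma R_eq_cfc: "R w = cfc (\<lambda>t. 1 - t^2) Psi w"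
proof -
  have "(\<lambda>t. 1 - t^2) = poly [:1, 0, -1::real:]" by (simp add: fun_eq_iff power2_eq_square)
  then show ?thesis by (simp add: Psi.cfc_poly real_poly_op_1_minus_sq_Psi)
qed

lemma shifted_kernel_trivial:
  assumes D: "d1 \<in> D" "d2 \<in> D" and s: "s = 1 \<or> s = -1"
    and eq: "s *\<^sub>R T d1 = d2" "d1 + s *\<^sub>R T d2 = 0"
  shows "d1 = 0" "d2 = 0"
proof -
  have ss: "s * s = 1" using s by auto
  have T1: "T d1 = s *\<^sub>R d2" using arg_cong[OF eq(1), of "scaleR s"] ss by simp
  have "s *\<^sub>R d1 + T d2 = 0" using arg_cong[OF eq(2), of "scaleR s"] ss by (simp add: scaleR_add_right)
  then have T2: "T d2 = - s *\<^sub>R d1" by (metis add.commute eq_neg_iff_add_eq_0 scaleR_minus_left)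
  have "s * inner d2 d2 = - s * inner d1 d1"
    using T_symmetric[OF D] T1 T2 by (simp add: inner_commute)
  then have "inner d1 d1 + inner d2 d2 = 0" using s by auto
  then show "d1 = 0" "d2 = 0" by (simp_all add: add_nonneg_eq_0_iff)
qed

lemma shifted_inv_eqI:
  assumes s: "s = 1 \<or> s = -1" and x: "x \<in> D \<times> D" "cmul \<i> x + s *\<^sub>R cext T x = w"
  shows "shifted_inv A \<i> s w = x"
  unfolding shifted_inv_def
proof (rule the_equality)
  show "x \<in> D \<times> D \<and> cmul \<i> x + s *\<^sub>R cext T x = w" using x by simp
  fix y assume y: "y \<in> D \<times> D \<and> cmul \<i> y + s *\<^sub>R cext T y = w"
  have D: "fst y - fst x \<in> D" "snd y - snd x \<in> D" using x y by (auto intro: D_diff)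
  moreover have "s *\<^sub>R T (fst y - fst x) = snd y - snd x"
    "fst y - fst x + s *\<^sub>R T (snd y - snd x) = 0"
    using x y by (auto simp: cmul_def cext_def prod_eq_iff T_diff algebra_simps)
  ultimately have "fst y - fst x = 0" "snd y - snd x = 0"
    using shifted_kernel_trivial[OF D s] by simp_all
  then show "y = x" by (simp add: prod_eq_iff)
qed

lemma shifted_inv_plus: "shifted_inv A \<i> 1 w = complexify K (\<lambda>x. - R x) w"
proof (rule shifted_inv_eqI)
  have T_K: "T (K u) = u - R u" for u by (simp add: K_def T_T_R)
  show "complexify K (\<lambda>x. - R x) w \<in> D \<times> D"
    using K_in_D R_solves D_add D_diff by (simp add: complexify_def)
  show "cmul \<i> (complexify K (\<lambda>x. - R x) w) + 1 *\<^sub>R cext T (complexify K (\<lambda>x. - R x) w) = w"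
    using K_in_D R_solves by (simp add: complexify_def cmul_def cext_def T_add T_diff T_K K_def[symmetric] prod_eq_iff)
qed simp

lemma shifted_inv_minus: "shifted_inv A \<i> (-1) w = complexify (\<lambda>x. - K x) (\<lambda>x. - R x) w"
proof (rule shifted_inv_eqI)
  have T_K: "T (K u) = u - R u" for u by (simp add: K_def T_T_R)
  have T_neg: "T (- x) = - T x" if "x \<in> D" for x using T_scale[OF that, of "-1"] by simp
  have neg_D: "- x \<in> D" if "x \<in> D" for x using D_scale[OF that, of "-1"] by simp
  show "complexify (\<lambda>x. - K x) (\<lambda>x. - R x) w \<in> D \<times> D"
    using K_in_D R_solves D_add D_diff neg_D by (simp add: complexify_def)
  show "cmul \<i> (complexify (\<lambda>x. - K x) (\<lambda>x. - R x) w) + (-1) *\<^sub>R cext T (complexify (\<lambda>x. - K x) (\<lambda>x. - R x) w) = w"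
    using K_in_D R_solves neg_D
    by (simp add: complexify_def cmul_def cext_def T_add T_diff T_neg T_K K_def[symmetric] prod_eq_iff)
qed simp

lemma shifted_inv_plus_eq_cfc: "shifted_inv A \<i> 1 = cfc_complex inv_i_plus Psi"
proof -
  have "cfc (\<lambda>t. Re (inv_i_plus t)) Psi = K"
    by (simp add: inv_i_plus_def K_eq_cfc fun_eq_iff)
  moreover have "cfc (\<lambda>t. Im (inv_i_plus t)) Psi = (\<lambda>x. - R x)"
    using Psi.cfc_scale[of "\<lambda>t. 1 - t^2" "-1"] by (simp add: fun_eq_iff inv_i_plus_def R_eq_cfc continuous_intros)
  ultimately show ?thesis by (intro ext) (simp add: cfc_complex_def shifted_inv_plus)
qed

lemma shifted_inv_minus_eq_cfc: "shifted_inv A \<i> (-1) = cfc_complex inv_i_minus Psi"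
proof -
  have "cfc (\<lambda>t. Re (inv_i_minus t)) Psi = (\<lambda>x. - K x)"
    using Psi.cfc_scale[of "\<lambda>t. t * sqrt (1 - t^2)" "-1"]
    by (simp add: fun_eq_iff inv_i_minus_def K_eq_cfc continuous_intros)
  moreover have "cfc (\<lambda>t. Im (inv_i_minus t)) Psi = (\<lambda>x. - R x)"
    using Psi.cfc_scale[of "\<lambda>t. 1 - t^2" "-1"] by (simp add: fun_eq_iff inv_i_minus_def R_eq_cfc continuous_intros)
  ultimately show ?thesis by (intro ext) (simp add: cfc_complex_def shifted_inv_minus)
qed

end

lemma operator_limit_unique:
  fixes P :: "nat \<Rightarrow> 'a::real_normed_vector \<Rightarrow> 'b::real_normed_vector"
  assumes bl: "\<And>k. bounded_linear (P k)" "bounded_linear B1" "bounded_linear B2"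
    and lim: "(\<lambda>k. onorm (\<lambda>x. P k x - B1 x)) \<longlonglongrightarrow> 0" "(\<lambda>k. onorm (\<lambda>x. P k x - B2 x)) \<longlonglongrightarrow> 0"
  shows "B1 = B2"
proof (rule ext)
  fix x :: 'a
  define b where "b k = (onorm (\<lambda>x. P k x - B2 x) + onorm (\<lambda>x. P k x - B1 x)) * norm x" for k
  have bound: "norm (B1 x - B2 x) \<le> b k" for k
  proof -
    have "norm (B1 x - B2 x) = norm ((P k x - B2 x) - (P k x - B1 x))" by simp
    also have "\<dots> \<le> norm (P k x - B2 x) + norm (P k x - B1 x)" by (rule norm_triangle_ineq4)
    also have "\<dots> \<le> b k" unfolding b_def distrib_right
      by (intro add_mono onorm bounded_linear_sub bl)
    finally show ?thesis .
  qed
  have "b \<longlonglongrightarrow> 0"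
    unfolding b_def by (rule tendsto_mult_left_zero[OF tendsto_add_zero[OF lim(2) lim(1)]])
  then have "norm (B1 x - B2 x) \<le> 0"
    by (rule tendsto_le[OF sequentially_bot _ tendsto_const]) (use bound in \<open>simp add: always_eventually\<close>)
  then show "B1 x = B2 x" by simp
qed

lemma exists_poly_seq_approx_psi:
  assumes f: "f \<in> algA"
  obtains p :: "nat \<Rightarrow> complex poly"
    where "\<forall>e>0. \<forall>\<^sub>F k in sequentially. \<forall>l. cmod (poly (p k) (complex_of_real (psi l)) - f l) < e"
proof
  have cr: "continuous_on {-1..1} (\<lambda>t. Re (psi_transfer f t))"
    and ci: "continuous_on {-1..1} (\<lambda>t. Im (psi_transfer f t))"
    by (intro continuous_intros continuous_on_psi_transfer[OF f])+
  define p where "p k = map_poly complex_of_real (poly_approx (\<lambda>t. Re (psi_transfer f t)) k)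
      + smult \<i> (map_poly complex_of_real (poly_approx (\<lambda>t. Im (psi_transfer f t)) k))" for k
  have bound: "cmod (poly (p k) (complex_of_real (psi l)) - f l) \<le> 2 * (1 / (real k + 1))" for k l
  proof -
    have t: "psi l \<in> {-1..1}" using psi_bounds[of l] by auto
    let ?z = "poly (p k) (complex_of_real (psi l)) - f l"
    have "Re ?z = poly (poly_approx (\<lambda>t. Re (psi_transfer f t)) k) (psi l) - Re (psi_transfer f (psi l))"
      "Im ?z = poly (poly_approx (\<lambda>t. Im (psi_transfer f t)) k) (psi l) - Im (psi_transfer f (psi l))"
      by (simp_all add: p_def poly_map_poly_of_real psi_transfer_psi)
    then show ?thesis
      using cmod_le[of ?z] poly_approx_error[OF cr t, of k] poly_approx_error[OF ci t, of k] by simp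
  qed
  show "\<forall>e>0. \<forall>\<^sub>F k in sequentially. \<forall>l. cmod (poly (p k) (complex_of_real (psi l)) - f l) < e"
  proof (intro allI impI)
    fix e :: real assume "e > 0"
    then have "\<forall>\<^sub>F k in sequentially. 2 * (1 / (real k + 1)) < e"
      using tendsto_mult_right_zero[OF inverse_Suc_tendsto_0, of 2] by (auto simp: order_tendsto_iff)
    then show "\<forall>\<^sub>F k in sequentially. \<forall>l. cmod (poly (p k) (complex_of_real (psi l)) - f l) < e"
      by eventually_elim (use bound in \<open>blast intro: le_less_trans\<close>)
  qed
qed

context dsa_op
begin

interpretation Psi: selfadjoint_contraction Psi by (rule selfadjoint_contraction_Psi)

lemma bounded_linear_poly_op_Psi: "bounded_linear (poly_op q (cext Psi))"
  unfolding Psi.poly_op_eq_cfc_complex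
  by (rule Psi.bounded_linear_cfc_complex[OF continuous_on_poly[OF continuous_on_of_real[OF continuous_on_id]]])

lemma onorm_poly_op_diff_le:
  assumes f: "f \<in> algA" and q: "\<And>l. cmod (poly q (complex_of_real (psi l)) - f l) \<le> e"
  shows "onorm (\<lambda>x. poly_op q (cext Psi) x - cfc_complex (psi_transfer f) Psi x) \<le> e"
proof -
  have hc: "continuous_on {-1..1} (psi_transfer f)" by (rule continuous_on_psi_transfer[OF f])
  have pc: "continuous_on {-1..1} (\<lambda>t. poly q (complex_of_real t))" by (intro continuous_intros)
  have "(\<lambda>x. poly_op q (cext Psi) x - cfc_complex (psi_transfer f) Psi x)
      = cfc_complex (\<lambda>t. poly q (complex_of_real t) - psi_transfer f t) Psi"
    by (rule ext) (simp add: Psi.poly_op_eq_cfc_complex Psi.cfc_complex_diff[OF pc hc])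
  then show ?thesis
    using Psi.onorm_cfc_complex_le[OF continuous_on_diff[OF pc hc] norm_poly_psi_transfer_le[OF f q]] by simp
qed

lemma tendsto_poly_op_cfc_complex:
  assumes f: "f \<in> algA"
    and p: "\<forall>e>0. \<forall>\<^sub>F k in sequentially. \<forall>l. cmod (poly (p k) (complex_of_real (psi l)) - f l) < e"
  shows "(\<lambda>k. onorm (\<lambda>x. poly_op (p k) (cext Psi) x - cfc_complex (psi_transfer f) Psi x)) \<longlonglongrightarrow> 0"
proof (rule order_tendstoI)
  fix a :: real assume "a < 0"
  have "0 \<le> onorm (\<lambda>x. poly_op (p k) (cext Psi) x - cfc_complex (psi_transfer f) Psi x)" for k
    by (intro onorm_pos_le bounded_linear_sub[OF bounded_linear_poly_op_Psi
          Psi.bounded_linear_cfc_complex[OF continuous_on_psi_transfer[OF f]]])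
  then show "\<forall>\<^sub>F k in sequentially. a < onorm (\<lambda>x. poly_op (p k) (cext Psi) x - cfc_complex (psi_transfer f) Psi x)"
    using \<open>a < 0\<close> by (intro always_eventually allI) (rule less_le_trans)
next
  fix a :: real assume "0 < a"
  then have "\<forall>\<^sub>F k in sequentially. \<forall>l. cmod (poly (p k) (complex_of_real (psi l)) - f l) < a / 2"
    using p half_gt_zero by blast
  then show "\<forall>\<^sub>F k in sequentially. onorm (\<lambda>x. poly_op (p k) (cext Psi) x - cfc_complex (psi_transfer f) Psi x) < a"
  proof eventually_elim
    case (elim k)
    then have "onorm (\<lambda>x. poly_op (p k) (cext Psi) x - cfc_complex (psi_transfer f) Psi x) \<le> a / 2"
      by (intro onorm_poly_op_diff_le[OF f] less_imp_le) blast
    then show ?case using \<open>0 < a\<close> by linarith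
  qed
qed


lemma fcalc_eq_cfc_complex:
  assumes f: "f \<in> algA"
  shows "fcalc f A = cfc_complex (psi_transfer f) Psi"
  unfolding fcalc_def
proof (rule the_equality)
  show "bounded_linear (cfc_complex (psi_transfer f) Psi) \<and>
    (\<forall>p. (\<forall>e>0. \<forall>\<^sub>F k in sequentially. \<forall>l. cmod (poly (p k) (complex_of_real (psi l)) - f l) < e) \<longrightarrow>
      (\<lambda>k. onorm (\<lambda>x. poly_op (p k) (cext Psi) x - cfc_complex (psi_transfer f) Psi x)) \<longlonglongrightarrow> 0)"
    using Psi.bounded_linear_cfc_complex[OF continuous_on_psi_transfer[OF f]] tendsto_poly_op_cfc_complex[OF f]
    by blast
next
  fix B' assume B': "bounded_linear B' \<and>
    (\<forall>p. (\<forall>e>0. \<forall>\<^sub>F k in sequentially. \<forall>l. cmod (poly (p k) (complex_of_real (psi l)) - f l) < e) \<longrightarrow>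
      (\<lambda>k. onorm (\<lambda>x. poly_op (p k) (cext Psi) x - B' x)) \<longlonglongrightarrow> 0)"
  obtain p where p: "\<forall>e>0. \<forall>\<^sub>F k in sequentially. \<forall>l. cmod (poly (p k) (complex_of_real (psi l)) - f l) < e"
    using exists_poly_seq_approx_psi[OF f] by blast
  show "B' = cfc_complex (psi_transfer f) Psi"
  proof (rule operator_limit_unique[OF bounded_linear_poly_op_Psi])
    show "bounded_linear B'" "(\<lambda>k. onorm (\<lambda>x. poly_op (p k) (cext Psi) x - B' x)) \<longlonglongrightarrow> 0"
      using B' p by blast+
  qed (rule Psi.bounded_linear_cfc_complex[OF continuous_on_psi_transfer[OF f]], rule tendsto_poly_op_cfc_complex[OF f p])
qed

end

section \<open>Norm convergence of the functional calculus\<close>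

lemma squeeze_0:
  fixes a b :: "nat \<Rightarrow> real"
  assumes "\<And>n. 0 \<le> a n" "\<And>n. a n \<le> b n" "b \<longlonglongrightarrow> 0"
  shows "a \<longlonglongrightarrow> 0"
  by (rule tendsto_sandwich[of "\<lambda>n. 0" _ _ b]) (use assms in auto)

locale selfadjoint_contraction_sequence =
  fixes Bs :: "nat \<Rightarrow> 'a::{real_inner,complete_space} \<Rightarrow> 'a" and B :: "'a \<Rightarrow> 'a"
  assumes Bs: "\<And>n. selfadjoint_contraction (Bs n)" and B: "selfadjoint_contraction B"
begin

definition cfc_dist :: "(real \<Rightarrow> real) \<Rightarrow> nat \<Rightarrow> real" where
  "cfc_dist u = (\<lambda>n. onorm (\<lambda>x. cfc u (Bs n) x - cfc u B x))"

definition cfc_converges :: "(real \<Rightarrow> real) \<Rightarrow> bool" where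
  "cfc_converges u \<longleftrightarrow> continuous_on {-1..1} u \<and> cfc_dist u \<longlonglongrightarrow> 0"

lemma bounded_linear_cfc_diff:
  "continuous_on {-1..1} u \<Longrightarrow> bounded_linear (\<lambda>x. cfc u (Bs n) x - cfc u B x)"
  by (intro bounded_linear_sub selfadjoint_contraction.bounded_linear_cfc[OF Bs]
      selfadjoint_contraction.bounded_linear_cfc[OF B])

lemma cfc_dist_nonneg: "continuous_on {-1..1} u \<Longrightarrow> 0 \<le> cfc_dist u n"
  unfolding cfc_dist_def by (rule onorm_pos_le[OF bounded_linear_cfc_diff])

lemma cfc_converges_add:
  assumes u: "cfc_converges u" and v: "cfc_converges v"
  shows "cfc_converges (\<lambda>t. u t + v t)"
proof -
  have uc: "continuous_on {-1..1} u" and vc: "continuous_on {-1..1} v"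
    using u v by (auto simp: cfc_converges_def)
  have "(\<lambda>x. cfc (\<lambda>t. u t + v t) (Bs n) x - cfc (\<lambda>t. u t + v t) B x)
      = (\<lambda>x. (cfc u (Bs n) x - cfc u B x) + (cfc v (Bs n) x - cfc v B x))" for n
    by (simp add: fun_eq_iff selfadjoint_contraction.cfc_add[OF Bs uc vc] selfadjoint_contraction.cfc_add[OF B uc vc])
  then have le: "cfc_dist (\<lambda>t. u t + v t) n \<le> cfc_dist u n + cfc_dist v n" for n
    unfolding cfc_dist_def
    by (simp add: onorm_triangle[OF bounded_linear_cfc_diff[OF uc] bounded_linear_cfc_diff[OF vc]])
  have "cfc_dist (\<lambda>t. u t + v t) \<longlonglongrightarrow> 0"
    using u v by (intro squeeze_0[OF cfc_dist_nonneg le] continuous_intros uc vc tendsto_add_zero)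
      (auto simp: cfc_converges_def)
  then show ?thesis using uc vc by (simp add: cfc_converges_def continuous_on_add)
qed

lemma cfc_converges_const: "cfc_converges (\<lambda>t. c)"
  by (simp add: cfc_converges_def cfc_dist_def selfadjoint_contraction.cfc_const[OF Bs]
      selfadjoint_contraction.cfc_const[OF B] onorm_zero)

lemma cfc_converges_mult:
  assumes u: "cfc_converges u" and v: "cfc_converges v"
  shows "cfc_converges (\<lambda>t. u t * v t)"
proof -
  have uc: "continuous_on {-1..1} u" and vc: "continuous_on {-1..1} v"
    using u v by (auto simp: cfc_converges_def)
  obtain M where M: "\<And>t. t \<in> {-1..1} \<Longrightarrow> \<bar>u t\<bar> \<le> M" using continuous_on_Icc_bounded[OF uc] by blast
  have blu: "bounded_linear (cfc u (Bs n))" and blv: "bounded_linear (cfc v B)" for n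
    by (rule selfadjoint_contraction.bounded_linear_cfc[OF Bs uc],
        rule selfadjoint_contraction.bounded_linear_cfc[OF B vc])
  have eq: "(\<lambda>x. cfc (\<lambda>t. u t * v t) (Bs n) x - cfc (\<lambda>t. u t * v t) B x)
      = (\<lambda>x. cfc u (Bs n) (cfc v (Bs n) x - cfc v B x) + (cfc u (Bs n) (cfc v B x) - cfc u B (cfc v B x)))" for n
    using linear_diff[OF bounded_linear.linear[OF blu]]
    by (simp add: fun_eq_iff selfadjoint_contraction.cfc_mult[OF Bs uc vc] selfadjoint_contraction.cfc_mult[OF B uc vc])
  have le: "cfc_dist (\<lambda>t. u t * v t) n \<le> M * cfc_dist v n + cfc_dist u n * onorm (cfc v B)" for n
  proof -
    have "cfc_dist (\<lambda>t. u t * v t) n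
        \<le> onorm (cfc u (Bs n) \<circ> (\<lambda>x. cfc v (Bs n) x - cfc v B x))
          + onorm ((\<lambda>x. cfc u (Bs n) x - cfc u B x) \<circ> cfc v B)"
      unfolding cfc_dist_def eq comp_def
      by (intro onorm_triangle bounded_linear_compose[OF blu bounded_linear_cfc_diff[OF vc]]
          bounded_linear_compose[OF bounded_linear_cfc_diff[OF uc] blv])
    also have "\<dots> \<le> onorm (cfc u (Bs n)) * cfc_dist v n + cfc_dist u n * onorm (cfc v B)"
      unfolding cfc_dist_def
      by (intro add_mono onorm_compose blu blv bounded_linear_cfc_diff uc vc)
    also have "onorm (cfc u (Bs n)) \<le> M" by (rule selfadjoint_contraction.onorm_cfc_le[OF Bs uc M])
    finally show ?thesis
      using cfc_dist_nonneg[OF vc] by (simp add: mult_right_mono add_mono)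
  qed
  have "cfc_dist (\<lambda>t. u t * v t) \<longlonglongrightarrow> 0"
  proof (rule squeeze_0[OF cfc_dist_nonneg le])
    show "(\<lambda>n. M * cfc_dist v n + cfc_dist u n * onorm (cfc v B)) \<longlonglongrightarrow> 0"
      using u v by (intro tendsto_add_zero tendsto_mult_right_zero tendsto_mult_left_zero)
        (auto simp: cfc_converges_def)
  qed (intro continuous_intros uc vc)
  then show ?thesis using uc vc by (simp add: cfc_converges_def continuous_on_mult)
qed

lemma cfc_dist_le_approx:
  assumes u: "continuous_on {-1..1} u" and g: "continuous_on {-1..1} g"
    and e: "\<And>t. t \<in> {-1..1} \<Longrightarrow> \<bar>u t - g t\<bar> \<le> e"
  shows "cfc_dist u n \<le> 2 * e + cfc_dist g n"
proof -
  have d: "continuous_on {-1..1} (\<lambda>t. u t - g t)" by (intro continuous_intros u g)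
  have bl: "bounded_linear (cfc (\<lambda>t. u t - g t) (Bs n))" "bounded_linear (cfc (\<lambda>t. u t - g t) B)"
    by (rule selfadjoint_contraction.bounded_linear_cfc[OF Bs d],
        rule selfadjoint_contraction.bounded_linear_cfc[OF B d])
  have "(\<lambda>x. cfc u (Bs n) x - cfc u B x)
      = (\<lambda>x. (cfc (\<lambda>t. u t - g t) (Bs n) x + (cfc g (Bs n) x - cfc g B x)) + - cfc (\<lambda>t. u t - g t) B x)"
    by (simp add: fun_eq_iff selfadjoint_contraction.cfc_diff[OF Bs u g] selfadjoint_contraction.cfc_diff[OF B u g])
  then have "cfc_dist u n
      \<le> (onorm (cfc (\<lambda>t. u t - g t) (Bs n)) + cfc_dist g n) + onorm (cfc (\<lambda>t. u t - g t) B)"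
    unfolding cfc_dist_def
    using onorm_triangle[OF bounded_linear_add[OF bl(1) bounded_linear_cfc_diff[OF g, of n]] bounded_linear_minus[OF bl(2)]]
      onorm_triangle[OF bl(1) bounded_linear_cfc_diff[OF g, of n]] onorm_neg[of "cfc (\<lambda>t. u t - g t) B"]
    by simp
  also have "\<dots> \<le> (e + cfc_dist g n) + e"
    by (intro add_mono order_refl selfadjoint_contraction.onorm_cfc_le[OF Bs d e]
        selfadjoint_contraction.onorm_cfc_le[OF B d e])
  finally show ?thesis by simp
qed

lemma cfc_converges_uniform_limit:
  assumes u: "continuous_on {-1..1} u"
    and approx: "\<And>e. e > 0 \<Longrightarrow> \<exists>g. cfc_converges g \<and> (\<forall>t\<in>{-1..1}. \<bar>u t - g t\<bar> < e)"
  shows "cfc_converges u"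
  unfolding cfc_converges_def
proof (intro conjI u order_tendstoI)
  fix a :: real assume "a < 0"
  then show "\<forall>\<^sub>F n in sequentially. a < cfc_dist u n"
    using cfc_dist_nonneg[OF u] by (intro always_eventually allI) (rule less_le_trans)
next
  fix a :: real assume "0 < a"
  then obtain g where g: "cfc_converges g" "\<forall>t\<in>{-1..1}. \<bar>u t - g t\<bar> < a / 4"
    using approx[of "a / 4"] by auto
  have g_le: "\<And>t. t \<in> {-1..1} \<Longrightarrow> \<bar>u t - g t\<bar> \<le> a / 4" using g(2) less_imp_le by blast
  have "\<forall>\<^sub>F n in sequentially. cfc_dist g n < a / 4"
    using g(1) \<open>0 < a\<close> unfolding cfc_converges_def order_tendsto_iff by (meson zero_less_divide_iff zero_less_numeral)
  then show "\<forall>\<^sub>F n in sequentially. cfc_dist u n < a"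
  proof eventually_elim
    case (elim n)
    then show ?case
      using cfc_dist_le_approx[OF u _ g_le, of n] g(1) \<open>0 < a\<close> by (simp add: cfc_converges_def)
  qed
qed

lemma cfc_converges_if_separating:
  assumes separating: "\<And>x y. x \<in> {-1..1} \<Longrightarrow> y \<in> {-1..1} \<Longrightarrow> x \<noteq> y \<Longrightarrow> \<exists>u. cfc_converges u \<and> u x \<noteq> u y"
    and u: "continuous_on {-1..1} u"
  shows "cfc_converges u"
proof -
  interpret function_ring_on "Collect cfc_converges" "{-1..1::real}"
  proof unfold_locales
    fix f g assume "f \<in> Collect cfc_converges" "g \<in> Collect cfc_converges"
    then show "(\<lambda>x. f x + g x) \<in> Collect cfc_converges" "(\<lambda>x. f x * g x) \<in> Collect cfc_converges"
      by (simp_all add: cfc_converges_add cfc_converges_mult)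
  next
    show "(\<lambda>_. c) \<in> Collect cfc_converges" for c by (simp add: cfc_converges_const)
  qed (use separating in \<open>auto simp: cfc_converges_def\<close>)
  show ?thesis
    using Stone_Weierstrass_basic[OF u] by (intro cfc_converges_uniform_limit[OF u]) blast
qed

lemma cfc_converges_cong:
  assumes "cfc_converges u" "\<And>t. t \<in> {-1..1} \<Longrightarrow> v t = u t"
  shows "cfc_converges v"
proof -
  have u: "continuous_on {-1..1} u" using assms(1) by (simp add: cfc_converges_def)
  then have "continuous_on {-1..1} v" by (rule continuous_on_cong[THEN iffD1, OF refl, rotated]) (simp add: assms(2))
  moreover have "cfc v (Bs n) x = cfc u (Bs n) x" for n x
    by (rule selfadjoint_contraction.cfc_cong[OF Bs u assms(2)])
  moreover have "cfc v B x = cfc u B x" for x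
    by (rule selfadjoint_contraction.cfc_cong[OF B u assms(2)])
  ultimately have "continuous_on {-1..1} v" "cfc_dist v = cfc_dist u" by (simp_all add: cfc_dist_def)
  then show ?thesis using assms(1) by (simp add: cfc_converges_def)
qed

lemma cfc_converges_if_ident: "cfc_converges (\<lambda>t. t) \<Longrightarrow> continuous_on {-1..1} u \<Longrightarrow> cfc_converges u"
  by (rule cfc_converges_if_separating) auto

lemma cfc_complex_converges_iff:
  assumes h: "continuous_on {-1..1} h"
  shows "(\<lambda>n. onorm (\<lambda>x. cfc_complex h (Bs n) x - cfc_complex h B x)) \<longlonglongrightarrow> 0
    \<longleftrightarrow> cfc_converges (\<lambda>t. Re (h t)) \<and> cfc_converges (\<lambda>t. Im (h t))"
proof -
  have cr: "continuous_on {-1..1} (\<lambda>t. Re (h t))" and ci: "continuous_on {-1..1} (\<lambda>t. Im (h t))"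
    by (intro continuous_intros h)+
  define P where "P n = (\<lambda>x. cfc (\<lambda>t. Re (h t)) (Bs n) x - cfc (\<lambda>t. Re (h t)) B x)" for n
  define Q where "Q n = (\<lambda>x. cfc (\<lambda>t. Im (h t)) (Bs n) x - cfc (\<lambda>t. Im (h t)) B x)" for n
  have e: "(\<lambda>x. cfc_complex h (Bs n) x - cfc_complex h B x) = complexify (P n) (Q n)" for n
    by (simp add: fun_eq_iff cfc_complex_def complexify_diff P_def Q_def)
  have bl: "bounded_linear (P n)" "bounded_linear (Q n)" for n
    unfolding P_def Q_def by (rule bounded_linear_cfc_diff[OF cr], rule bounded_linear_cfc_diff[OF ci])
  have le: "cfc_dist (\<lambda>t. Re (h t)) n \<le> onorm (complexify (P n) (Q n))"
    "cfc_dist (\<lambda>t. Im (h t)) n \<le> onorm (complexify (P n) (Q n))"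
    "onorm (complexify (P n) (Q n)) \<le> cfc_dist (\<lambda>t. Re (h t)) n + cfc_dist (\<lambda>t. Im (h t)) n" for n
    using onorm_le_onorm_complexify[OF bl] onorm_complexify_le[OF bl] by (simp_all add: cfc_dist_def P_def Q_def)
  show ?thesis
    unfolding e cfc_converges_def
  proof (intro iffI conjI cr ci)
    assume "(\<lambda>n. onorm (complexify (P n) (Q n))) \<longlonglongrightarrow> 0"
    then show "cfc_dist (\<lambda>t. Re (h t)) \<longlonglongrightarrow> 0" "cfc_dist (\<lambda>t. Im (h t)) \<longlonglongrightarrow> 0"
      by (rule squeeze_0[OF cfc_dist_nonneg[OF cr] le(1)], rule squeeze_0[OF cfc_dist_nonneg[OF ci] le(2)])
  next
    assume "(continuous_on {-1..1} (\<lambda>t. Re (h t)) \<and> cfc_dist (\<lambda>t. Re (h t)) \<longlonglongrightarrow> 0) \<and>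
      continuous_on {-1..1} (\<lambda>t. Im (h t)) \<and> cfc_dist (\<lambda>t. Im (h t)) \<longlonglongrightarrow> 0"
    then show "(\<lambda>n. onorm (complexify (P n) (Q n))) \<longlonglongrightarrow> 0"
      by (intro squeeze_0[OF onorm_pos_le[OF bounded_linear_complexify[OF bl]] le(3)] tendsto_add_zero) auto
  qed
qed


\<comment> \<open>\<open>(\<i> + t)\<^sup>-\<^sup>1\<close> separates all points of [-1, 1] except \<open>\<plusminus>1\<close>, which \<open>a\<close> separates.\<close>
lemma cfc_converges_ident_if_inv_i_plus_converges:
  assumes "cfc_converges (\<lambda>t. Re (inv_i_plus t))" "cfc_converges (\<lambda>t. Im (inv_i_plus t))"
    and "cfc_converges a" "a 1 \<noteq> a (-1)"
  shows "cfc_converges (\<lambda>t. t)"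
proof (rule cfc_converges_if_separating)
  fix x y :: real assume xy: "x \<in> {-1..1}" "y \<in> {-1..1}" "x \<noteq> y"
  show "\<exists>u. cfc_converges u \<and> u x \<noteq> u y"
  proof (cases "inv_i_plus x = inv_i_plus y")
    case True
    then have "{x, y} = {-1, 1}" by (rule inv_i_plus_eq_imp_endpoints[OF xy])
    then have "a x \<noteq> a y" using assms(4) by (auto simp: doubleton_eq_iff)
    then show ?thesis using assms(3) by blast
  next
    case neq: False
    show ?thesis
    proof (cases "Re (inv_i_plus x) = Re (inv_i_plus y)")
      case True
      then have "Im (inv_i_plus x) \<noteq> Im (inv_i_plus y)" using neq by (simp add: complex_eq_iff)
      then show ?thesis using assms(2) by (intro exI[of _ "\<lambda>t. Im (inv_i_plus t)"]) simp
    next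
      case False
      then show ?thesis using assms(1) by (intro exI[of _ "\<lambda>t. Re (inv_i_plus t)"]) simp
    qed
  qed
qed (rule continuous_on_id)

end

section \<open>Convergence of selfadjoint operators\<close>

lemma psi_in_algA: "(\<lambda>l. complex_of_real (psi l)) \<in> algA"
  unfolding algA_def
proof (intro CollectI conjI exI)
  have "1 + l^2 \<noteq> (0::real)" for l by (smt (verit) zero_le_power2)
  then show "continuous_on UNIV (\<lambda>l. complex_of_real (psi l))"
    unfolding psi_def by (intro continuous_intros) simp
  show "((\<lambda>l. complex_of_real (psi l)) \<longlongrightarrow> 1) at_top"
    using tendsto_of_real[OF psi_tendsto_at_top, where 'a=complex] by simp
  show "((\<lambda>l. complex_of_real (psi l)) \<longlongrightarrow> -1) at_bot"
    using tendsto_of_real[OF psi_tendsto_at_bot, where 'a=complex] by simp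
qed

lemma Re_psi_transfer_psi:
  assumes "t \<in> {-1..1}"
  shows "Re (psi_transfer (\<lambda>l. complex_of_real (psi l)) t) = t"
proof -
  consider "t = 1" | "t = -1" | "-1 < t" "t < 1" using assms by fastforce
  then show ?thesis
  proof cases
    case 1
    then show ?thesis using psi_transfer_1[OF tendsto_of_real[OF psi_tendsto_at_top, where 'a=complex]] by simp
  next
    case 2
    then show ?thesis using psi_transfer_minus_1[OF tendsto_of_real[OF psi_tendsto_at_bot, where 'a=complex]] by simp
  next
    case 3
    then show ?thesis by (simp add: psi_transfer_def psi_psi_inv)
  qed
qed

locale dsa_sequence =
  fixes As :: "nat \<Rightarrow> ('a::{real_inner,complete_space}) op" and A :: "'a op"
  assumes dsa_As: "\<And>n. dsa (As n)" and dsa_A: "dsa A"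
begin

sublocale selfadjoint_contraction_sequence "\<lambda>n. riesz (As n)" "riesz A"
  by (intro selfadjoint_contraction_sequence.intro dsa_op.selfadjoint_contraction_Psi dsa_op.intro dsa_As dsa_A)

lemma fcalc_As: "f \<in> algA \<Longrightarrow> fcalc f (As n) = cfc_complex (psi_transfer f) (riesz (As n))"
  and fcalc_A: "f \<in> algA \<Longrightarrow> fcalc f A = cfc_complex (psi_transfer f) (riesz A)"
  using dsa_As dsa_A by (simp_all add: dsa_op.fcalc_eq_cfc_complex dsa_op_def)

lemma riesz_metric_tendsto_iff: "(\<lambda>n. riesz_metric (As n) A) \<longlonglongrightarrow> 0 \<longleftrightarrow> cfc_converges (\<lambda>t. t)"
  using selfadjoint_contraction.cfc_ident[OF Bs] selfadjoint_contraction.cfc_ident[OF B]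
  by (simp add: cfc_converges_def cfc_dist_def riesz_metric_def continuous_on_id)

lemma fcalc_tendsto_iff:
  assumes "f \<in> algA"
  shows "(\<lambda>n. onorm (\<lambda>x. fcalc f (As n) x - fcalc f A x)) \<longlonglongrightarrow> 0
    \<longleftrightarrow> cfc_converges (\<lambda>t. Re (psi_transfer f t)) \<and> cfc_converges (\<lambda>t. Im (psi_transfer f t))"
  using cfc_complex_converges_iff[OF continuous_on_psi_transfer[OF assms]]
  by (simp add: fcalc_As[OF assms] fcalc_A[OF assms])

lemma gap_metric_eq:
  "gap_metric (As n) A
    = onorm (\<lambda>w. cfc_complex inv_i_plus (riesz (As n)) w - cfc_complex inv_i_plus (riesz A) w)
    + onorm (\<lambda>w. cfc_complex inv_i_minus (riesz (As n)) w - cfc_complex inv_i_minus (riesz A) w)"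
  using dsa_As dsa_A
  by (simp add: gap_metric_def dsa_op.shifted_inv_plus_eq_cfc dsa_op.shifted_inv_minus_eq_cfc dsa_op_def)

lemma riesz_tendsto_iff_fcalc_tendsto:
  "(\<lambda>n. riesz_metric (As n) A) \<longlonglongrightarrow> 0
    \<longleftrightarrow> (\<forall>f\<in>algA. (\<lambda>n. onorm (\<lambda>x. fcalc f (As n) x - fcalc f A x)) \<longlonglongrightarrow> 0)"
proof
  assume "(\<lambda>n. riesz_metric (As n) A) \<longlonglongrightarrow> 0"
  then have ident: "cfc_converges (\<lambda>t. t)" by (simp add: riesz_metric_tendsto_iff)
  show "\<forall>f\<in>algA. (\<lambda>n. onorm (\<lambda>x. fcalc f (As n) x - fcalc f A x)) \<longlonglongrightarrow> 0"
  proof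
    fix f assume f: "f \<in> algA"
    have "continuous_on {-1..1} (\<lambda>t. Re (psi_transfer f t))" "continuous_on {-1..1} (\<lambda>t. Im (psi_transfer f t))"
      by (intro continuous_intros continuous_on_psi_transfer[OF f])+
    then show "(\<lambda>n. onorm (\<lambda>x. fcalc f (As n) x - fcalc f A x)) \<longlonglongrightarrow> 0"
      using cfc_converges_if_ident[OF ident] by (simp add: fcalc_tendsto_iff[OF f])
  qed
next
  assume "\<forall>f\<in>algA. (\<lambda>n. onorm (\<lambda>x. fcalc f (As n) x - fcalc f A x)) \<longlonglongrightarrow> 0"
  then have "cfc_converges (\<lambda>t. Re (psi_transfer (\<lambda>l. complex_of_real (psi l)) t))"
    using psi_in_algA fcalc_tendsto_iff by blast
  then show "(\<lambda>n. riesz_metric (As n) A) \<longlonglongrightarrow> 0"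
    unfolding riesz_metric_tendsto_iff by (rule cfc_converges_cong) (simp add: Re_psi_transfer_psi)
qed

lemma fcalc_tendsto_imp_gap_tendsto:
  assumes "\<forall>f\<in>algA. (\<lambda>n. onorm (\<lambda>x. fcalc f (As n) x - fcalc f A x)) \<longlonglongrightarrow> 0"
  shows "(\<lambda>n. gap_metric (As n) A) \<longlonglongrightarrow> 0"
proof -
  have "cfc_converges u" if "continuous_on {-1..1} u" for u
    using assms riesz_tendsto_iff_fcalc_tendsto riesz_metric_tendsto_iff cfc_converges_if_ident that by blast
  then have lim: "(\<lambda>n. onorm (\<lambda>w. cfc_complex h (riesz (As n)) w - cfc_complex h (riesz A) w)) \<longlonglongrightarrow> 0"
    if "continuous_on {-1..1} h" for h
    using that by (simp add: cfc_complex_converges_iff continuous_intros)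
  show ?thesis
    unfolding gap_metric_eq
    by (rule tendsto_add_zero[OF lim lim]) (rule continuous_on_inv_i_plus continuous_on_inv_i_minus)+
qed

lemma gap_tendsto_imp_inv_i_plus_converges:
  assumes "(\<lambda>n. gap_metric (As n) A) \<longlonglongrightarrow> 0"
  shows "cfc_converges (\<lambda>t. Re (inv_i_plus t))" "cfc_converges (\<lambda>t. Im (inv_i_plus t))"
proof -
  have bl: "bounded_linear (\<lambda>w. cfc_complex h (riesz (As n)) w - cfc_complex h (riesz A) w)"
    if "continuous_on {-1..1} h" for h n
    by (intro bounded_linear_sub selfadjoint_contraction.bounded_linear_cfc_complex[OF Bs that]
        selfadjoint_contraction.bounded_linear_cfc_complex[OF B that])
  have "(\<lambda>n. onorm (\<lambda>w. cfc_complex inv_i_plus (riesz (As n)) w - cfc_complex inv_i_plus (riesz A) w)) \<longlonglongrightarrow> 0"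
  proof (rule squeeze_0[OF _ _ assms])
    show "onorm (\<lambda>w. cfc_complex inv_i_plus (riesz (As n)) w - cfc_complex inv_i_plus (riesz A) w)
        \<le> gap_metric (As n) A" for n
      using onorm_pos_le[OF bl[OF continuous_on_inv_i_minus]] by (simp add: gap_metric_eq)
  qed (rule onorm_pos_le[OF bl[OF continuous_on_inv_i_plus]])
  then show "cfc_converges (\<lambda>t. Re (inv_i_plus t))" "cfc_converges (\<lambda>t. Im (inv_i_plus t))"
    by (simp_all add: cfc_complex_converges_iff continuous_on_inv_i_plus)
qed

lemma gap_alpha_tendsto_imp_riesz_tendsto:
  assumes \<alpha>: "\<alpha> \<in> algA" "\<forall>\<^sub>F l in at_top. \<alpha> l = 1" "\<forall>\<^sub>F l in at_bot. \<alpha> l = 0"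
    and gap: "(\<lambda>n. gap_metric (As n) A) \<longlonglongrightarrow> 0"
    and \<alpha>_tendsto: "(\<lambda>n. onorm (\<lambda>x. fcalc \<alpha> (As n) x - fcalc \<alpha> A x)) \<longlonglongrightarrow> 0"
  shows "(\<lambda>n. riesz_metric (As n) A) \<longlonglongrightarrow> 0"
proof -
  have "Re (psi_transfer \<alpha> 1) = 1" "Re (psi_transfer \<alpha> (-1)) = 0"
    using psi_transfer_1[OF tendsto_eventually[OF \<alpha>(2)]] psi_transfer_minus_1[OF tendsto_eventually[OF \<alpha>(3)]]
    by simp_all
  then show ?thesis unfolding riesz_metric_tendsto_iff
    using gap_tendsto_imp_inv_i_plus_converges[OF gap] \<alpha>_tendsto fcalc_tendsto_iff[OF \<alpha>(1)]
    by (intro cfc_converges_ident_if_inv_i_plus_converges[where a="\<lambda>t. Re (psi_transfer \<alpha> t)"]) auto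
qed

end

theorem proposition1p3:
  fixes As :: "nat \<Rightarrow> ('a::{real_inner,complete_space}) op"
    and A :: "'a op"
    and \<alpha> :: "real \<Rightarrow> complex"
  assumes "separable_space (euclidean :: 'a topology)"
    and "\<alpha> \<in> algA"
    and "\<forall>\<^sub>F l in at_top. \<alpha> l = 1"
    and "\<forall>\<^sub>F l in at_bot. \<alpha> l = 0"
    and "\<And>n. dsa (As n)"
    and "dsa A"
  shows "((\<lambda>n. riesz_metric (As n) A) \<longlonglongrightarrow> 0
           \<longleftrightarrow> (\<forall>f\<in>algA. (\<lambda>n. onorm (\<lambda>x. fcalc f (As n) x - fcalc f A x)) \<longlonglongrightarrow> 0))
       \<and> ((\<forall>f\<in>algA. (\<lambda>n. onorm (\<lambda>x. fcalc f (As n) x - fcalc f A x)) \<longlonglongrightarrow> 0)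
           \<longleftrightarrow> ((\<lambda>n. gap_metric (As n) A) \<longlonglongrightarrow> 0 \<and>
                (\<lambda>n. onorm (\<lambda>x. fcalc \<alpha> (As n) x - fcalc \<alpha> A x)) \<longlonglongrightarrow> 0))"
proof -
  interpret dsa_sequence As A using assms(5,6) by unfold_locales
  show ?thesis
    using riesz_tendsto_iff_fcalc_tendsto fcalc_tendsto_imp_gap_tendsto
      gap_alpha_tendsto_imp_riesz_tendsto[OF assms(2-4)] assms(2) by blast
qed

end
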